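(* Let $G_*$ be an operadic crossed simplicial group and let $\Gamma_n=G_n/\!\!/P_n$ be its action groupoids. For $n,m\ge0$ and $0\le i\le n$ define $\circ_i\colon\Gamma_n\times\Gamma_m\to\Gamma_{n+m}$ by $$[\sigma,f]\circ_i[\tau,g]=[\sigma\circ_i\tau,\,(f^{-1}\circ_{\sigma^{-1}(i)}g^{-1})^{-1}],$$ where $\sigma\circ_i\tau$ is the set-operad composition on $S_*$ and $f^{-1}\circ_{\sigma^{-1}(i)}g^{-1}$ is the set-operad composition on $G_*$ (both described in the context). Then each $\circ_i$ is a functor of groupoids, and the sequence of groupoids $\{\Gamma_n\}_{n\ge0}$ with the operations $\circ_i$ and the simplicial face maps $d_j$ of $\Gamma_*$ forms a shifted operad in $\textsf{Gpd}$.
   Context: A crossed simplicial group $G_*$: groups $G_n$ ($n\ge0$) with a left action of $G_n$ on $[n]=\{0,\dots,n\}$ and maps $d_i,s_i$ forming a simplicial set with $d_i(gh)=d_i(g)d_{g^{-1}(i)}(h)$, $s_i(gh)=s_i(g)s_{g^{-1}(i)}(h)$. By the Fiedorowicz–Loday structure theorem there is a canonical short exact sequence $1\to P_*\to G_*\xrightarrow{\pi}N_*\to1$ with $P_*$ a simplicial group acting trivially on each $[n]$. $G_*$ is symmetric if $N_*=S_*$, the symmetric crossed simplicial group with $S_n=\mathrm{Bij}([n])$. On $S_*$ let $s_L(\sigma)=(0,\sigma(0)+1,\dots,\sigma(n)+1)$ and $s_R(\sigma)=(\sigma(0),\dots,\sigma(n),n+1)$ (adding a fixed point on the left, resp. right).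 A symmetric crossed simplicial group is ambi contractible if equipped with a left contraction (extra degeneracy) $s_L=s_{-1}\colon G_n\to G_{n+1}$ and right contraction $s_R=s_{n+1}\colon G_n\to G_{n+1}$, both group homomorphisms compatible with $s_L,s_R$ on $S_*$ via $\pi$. It is monoidal if $(\alpha,\beta)\mapsto s_R^{m+1}(\alpha)\cdot s_L^{n+1}(\beta)$, $G_n\times G_m\to G_{n+m+1}$, is a group homomorphism. Notation: for $\beta\in G_m$ and $a,b\ge0$, $1_a\boxplus\beta\boxplus1_b:=s_L^a(s_R^b(\beta))\in G_{m+a+b}$. A monoidal crossed simplicial group is operadic if for all $\alpha\in G_n$, $\beta\in G_m$, $0\le i\le n$: $(1_i\boxplus\beta\boxplus1_{n-i})\cdot s_i^m(\alpha)=s_i^m(\alpha)\cdot(1_{\alpha^{-1}(i)}\boxplus\beta\boxplus1_{n-\alpha^{-1}(i)})$, where $s_i^m$ is the $m$-fold iterate of $s_i$. The set-operad composition on $G_*$ (and likewise on $S_*$, which is itself operadic) is $\alpha\circ_i\beta=(1_i\boxplus\beta\boxplus1_{n-i})\cdot s_i^m(\alpha)\in G_{n+m}$ for $\alpha\in G_n,\beta\in G_m$, $0\le i\le n$. The action groupoid $\Gamma_n=G_n/\!\!/P_n$ has objects $\sigma\in G_n/P_n\cong S_n$ and morphisms $[\sigma,f]\colon\sigma\to\sigma\pi(f)^{-1}$ for $f\in G_n$, composed by $[\sigma\pi(f)^{-1},g]\cdot[\sigma,f]=[\sigma,gf]$; its face maps are $d_j[\sigma,f]=[d_j\sigma,d_{\sigma^{-1}(j)}(f^{-1})^{-1}]$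 (with $d_j\sigma$ in $S_*$, $\sigma^{-1}(j)$ the inverse permutation applied to $j$, and the outer $d$ that of $G_*$). A shifted operad in $\textsf{Gpd}$ (with cartesian product) is a semi-simplicial groupoid $\mathcal{U}( * )$ (faces $d_i\colon\mathcal{U}(n)\to\mathcal{U}(n-1)$) with functors $\circ_i\colon\mathcal{U}(n)\times\mathcal{U}(m)\to\mathcal{U}(n+m)$, $0\le i\le n$, such that: there is $\mathrm{id}\in\mathcal{U}(0)$ with $\mathrm{id}\circ_0\nu=\nu$, $\mu\circ_i\mathrm{id}=\mu$; $(\lambda\circ_i\mu)\circ_{i+j}\nu=\lambda\circ_i(\mu\circ_j\nu)$ ($\lambda\in\mathcal{U}(l),\mu\in\mathcal{U}(m),\nu\in\mathcal{U}(n)$, $0\le i\le l$, $0\le j\le m$); $(\lambda\circ_i\mu)\circ_{k+m}\nu=(\lambda\circ_k\nu)\circ_i\mu$ for $0\le i<k\le l$; $d_{i+j}(\lambda\circ_i\mu)=\lambda\circ_id_j(\mu)$; and for $0\le i<k\le l$, $d_i(\lambda\circ_k\nu)=d_i(\lambda)\circ_{k-1}\nu$ and $d_{k+m}(\lambda\circ_i\mu)=d_k(\lambda)\circ_i\mu$. *)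

theory Defs
  imports "HOL-Algebra.Bij"
begin

section \<open>Crossed simplicial groups (graded data)\<close>

text \<open>A crossed simplicial group is given by: the groups G_n (carrier, multiplication,
unit), the left action of G_n on [n] = {..n} (as a group homomorphism into the
group of extensional bijections of {..n}), face maps cd n i : G_n -> G_(n-1),
degeneracies cs n i : G_n -> G_(n+1), and (for ambi contractible ones) the left and
right contractions csL n, csR n : G_n -> G_(n+1).\<close>

record 'g csg =
  cG   :: "nat \<Rightarrow> 'g set"
  cmul :: "nat \<Rightarrow> 'g \<Rightarrow> 'g \<Rightarrow> 'g"
  cone :: "nat \<Rightarrow> 'g"
  cact :: "nat \<Rightarrow> 'g \<Rightarrow> (nat \<Rightarrow> nat)"
  cd   :: "nat \<Rightarrow> nat \<Rightarrow> 'g \<Rightarrow> 'g"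
  cs   :: "nat \<Rightarrow> nat \<Rightarrow> 'g \<Rightarrow> 'g"
  csL  :: "nat \<Rightarrow> 'g \<Rightarrow> 'g"
  csR  :: "nat \<Rightarrow> 'g \<Rightarrow> 'g"

definition grp :: "'g csg \<Rightarrow> nat \<Rightarrow> 'g monoid" where
  "grp C n = \<lparr>carrier = cG C n, mult = cmul C n, one = cone C n\<rparr>"

definition cinv :: "'g csg \<Rightarrow> nat \<Rightarrow> 'g \<Rightarrow> 'g" where
  "cinv C n g = inv\<^bsub>grp C n\<^esub> g"

definition pinv :: "nat \<Rightarrow> (nat \<Rightarrow> nat) \<Rightarrow> (nat \<Rightarrow> nat)" where
  "pinv n \<sigma> = inv\<^bsub>BijGroup {..n}\<^esub> \<sigma>"

definition delta :: "nat \<Rightarrow> nat \<Rightarrow> nat" where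
  "delta i k = (if k < i then k else Suc k)"

definition delta_inv :: "nat \<Rightarrow> nat \<Rightarrow> nat" where
  "delta_inv i k = (if k < i then k else k - 1)"

definition codeg :: "nat \<Rightarrow> nat \<Rightarrow> nat" where
  "codeg j k = (if k \<le> j then k else k - 1)"

text \<open>d_i(sigma): delete sigma^-1(i) from the source and i from the target.\<close>
definition sym_face :: "nat \<Rightarrow> nat \<Rightarrow> (nat \<Rightarrow> nat) \<Rightarrow> (nat \<Rightarrow> nat)" where
  "sym_face n i \<sigma> = (\<lambda>k\<in>{..n-1}. delta_inv i (\<sigma> (delta (pinv n \<sigma> i) k)))"

text \<open>s_i(sigma): double sigma^-1(i) in the source and i in the target,
order preservingly on the doubled pair.\<close>
definition sym_degen :: "nat \<Rightarrow> nat \<Rightarrow> (nat \<Rightarrow> nat) \<Rightarrow> (nat \<Rightarrow> nat)" where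
  "sym_degen n i \<sigma> = (\<lambda>k\<in>{..Suc n}.
     (let j = pinv n \<sigma> i in
      if k = j then i else if k = Suc j then Suc i
      else (let v = \<sigma> (codeg j k) in if v < i then v else Suc v)))"

definition sym_sL :: "nat \<Rightarrow> (nat \<Rightarrow> nat) \<Rightarrow> (nat \<Rightarrow> nat)" where
  "sym_sL n \<sigma> = (\<lambda>k\<in>{..Suc n}. if k = 0 then 0 else Suc (\<sigma> (k - 1)))"

definition sym_sR :: "nat \<Rightarrow> (nat \<Rightarrow> nat) \<Rightarrow> (nat \<Rightarrow> nat)" where
  "sym_sR n \<sigma> = (\<lambda>k\<in>{..Suc n}. if k = Suc n then Suc n else \<sigma> k)"

definition Sym :: "(nat \<Rightarrow> nat) csg" where
  "Sym = \<lparr>cG = (\<lambda>n. Bij {..n}),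
          cmul = (\<lambda>n. mult (BijGroup {..n})),
          cone = (\<lambda>n. one (BijGroup {..n})),
          cact = (\<lambda>n \<sigma>. \<sigma>),
          cd = sym_face, cs = sym_degen, csL = sym_sL, csR = sym_sR\<rparr>"

definition crossed_simplicial_group :: "'g csg \<Rightarrow> bool" where
  "crossed_simplicial_group C \<longleftrightarrow>
    (\<forall>n. group (grp C n)) \<and>
    (\<forall>n. cact C n \<in> hom (grp C n) (BijGroup {..n})) \<and>
    (\<forall>n i g. 1 \<le> n \<longrightarrow> i \<le> n \<longrightarrow> g \<in> cG C n \<longrightarrow> cd C n i g \<in> cG C (n - 1)) \<and>
    (\<forall>n i g. i \<le> n \<longrightarrow> g \<in> cG C n \<longrightarrow> cs C n i g \<in> cG C (Suc n)) \<and>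
    \<comment> \<open>simplicial identities\<close>
    (\<forall>n i j g. 2 \<le> n \<longrightarrow> i < j \<longrightarrow> j \<le> n \<longrightarrow> g \<in> cG C n \<longrightarrow>
        cd C (n - 1) i (cd C n j g) = cd C (n - 1) (j - 1) (cd C n i g)) \<and>
    (\<forall>n i j g. i \<le> j \<longrightarrow> j \<le> n \<longrightarrow> g \<in> cG C n \<longrightarrow>
        cs C (Suc n) i (cs C n j g) = cs C (Suc n) (Suc j) (cs C n i g)) \<and>
    (\<forall>n i j g. i < j \<longrightarrow> j \<le> n \<longrightarrow> g \<in> cG C n \<longrightarrow>
        cd C (Suc n) i (cs C n j g) = cs C (n - 1) (j - 1) (cd C n i g)) \<and>
    (\<forall>n j g. j \<le> n \<longrightarrow> g \<in> cG C n \<longrightarrow>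
        cd C (Suc n) j (cs C n j g) = g \<and> cd C (Suc n) (Suc j) (cs C n j g) = g) \<and>
    (\<forall>n i j g. Suc j < i \<longrightarrow> i \<le> Suc n \<longrightarrow> g \<in> cG C n \<longrightarrow>
        cd C (Suc n) i (cs C n j g) = cs C (n - 1) j (cd C n (i - 1) g)) \<and>
    \<comment> \<open>crossed identities\<close>
    (\<forall>n i g h. 1 \<le> n \<longrightarrow> i \<le> n \<longrightarrow> g \<in> cG C n \<longrightarrow> h \<in> cG C n \<longrightarrow>
        cd C n i (cmul C n g h) =
        cmul C (n - 1) (cd C n i g) (cd C n (cact C n (cinv C n g) i) h)) \<and>
    (\<forall>n i g h. i \<le> n \<longrightarrow> g \<in> cG C n \<longrightarrow> h \<in> cG C n \<longrightarrow>
        cs C n i (cmul C n g h) =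
        cmul C (Suc n) (cs C n i g) (cs C n (cact C n (cinv C n g) i) h)) \<and>
    \<comment> \<open>the action is compatible with the simplicial structure (G_* -> S_*)\<close>
    (\<forall>n i g. 1 \<le> n \<longrightarrow> i \<le> n \<longrightarrow> g \<in> cG C n \<longrightarrow>
        cact C (n - 1) (cd C n i g) = sym_face n i (cact C n g)) \<and>
    (\<forall>n i g. i \<le> n \<longrightarrow> g \<in> cG C n \<longrightarrow>
        cact C (Suc n) (cs C n i g) = sym_degen n i (cact C n g))"

definition symmetric_csg :: "'g csg \<Rightarrow> bool" where
  "symmetric_csg C \<longleftrightarrow> crossed_simplicial_group C \<and>
     (\<forall>n. cact C n ` cG C n = Bij {..n})"

text \<open>Left contraction s_L = s_(-1) and right contraction s_R = s_(n+1): group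
homomorphisms lying over s_L, s_R of S_*, satisfying the simplicial identities
with the extended indices -1 and n+1.\<close>
definition ambi_contractible :: "'g csg \<Rightarrow> bool" where
  "ambi_contractible C \<longleftrightarrow> symmetric_csg C \<and>
    (\<forall>n g. g \<in> cG C n \<longrightarrow> csL C n g \<in> cG C (Suc n) \<and> csR C n g \<in> cG C (Suc n)) \<and>
    (\<forall>n g h. g \<in> cG C n \<longrightarrow> h \<in> cG C n \<longrightarrow>
        csL C n (cmul C n g h) = cmul C (Suc n) (csL C n g) (csL C n h) \<and>
        csR C n (cmul C n g h) = cmul C (Suc n) (csR C n g) (csR C n h)) \<and>
    (\<forall>n g. g \<in> cG C n \<longrightarrow>
        cact C (Suc n) (csL C n g) = sym_sL n (cact C n g) \<and>
        cact C (Suc n) (csR C n g) = sym_sR n (cact C n g)) \<and>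
    \<comment> \<open>identities for s_L = s_(-1)\<close>
    (\<forall>n g. g \<in> cG C n \<longrightarrow> cd C (Suc n) 0 (csL C n g) = g) \<and>
    (\<forall>n i g. 1 \<le> n \<longrightarrow> 1 \<le> i \<longrightarrow> i \<le> Suc n \<longrightarrow> g \<in> cG C n \<longrightarrow>
        cd C (Suc n) i (csL C n g) = csL C (n - 1) (cd C n (i - 1) g)) \<and>
    (\<forall>n j g. j \<le> n \<longrightarrow> g \<in> cG C n \<longrightarrow>
        csL C (Suc n) (cs C n j g) = cs C (Suc n) (Suc j) (csL C n g)) \<and>
    (\<forall>n g. g \<in> cG C n \<longrightarrow> csL C (Suc n) (csL C n g) = cs C (Suc n) 0 (csL C n g)) \<and>
    \<comment> \<open>identities for s_R = s_(n+1)\<close>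
    (\<forall>n g. g \<in> cG C n \<longrightarrow> cd C (Suc n) (Suc n) (csR C n g) = g) \<and>
    (\<forall>n i g. 1 \<le> n \<longrightarrow> i \<le> n \<longrightarrow> g \<in> cG C n \<longrightarrow>
        cd C (Suc n) i (csR C n g) = csR C (n - 1) (cd C n i g)) \<and>
    (\<forall>n i g. i \<le> n \<longrightarrow> g \<in> cG C n \<longrightarrow>
        cs C (Suc n) i (csR C n g) = csR C (Suc n) (cs C n i g)) \<and>
    (\<forall>n g. g \<in> cG C n \<longrightarrow> cs C (Suc n) (Suc n) (csR C n g) = csR C (Suc n) (csR C n g)) \<and>
    \<comment> \<open>s_(-1) s_(n+1) = s_(n+2) s_(-1)\<close>
    (\<forall>n g. g \<in> cG C n \<longrightarrow> csL C (Suc n) (csR C n g) = csR C (Suc n) (csL C n g))"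

primrec sL_pow :: "'g csg \<Rightarrow> nat \<Rightarrow> nat \<Rightarrow> 'g \<Rightarrow> 'g" where
  "sL_pow C 0 m x = x"
| "sL_pow C (Suc a) m x = csL C (m + a) (sL_pow C a m x)"

primrec sR_pow :: "'g csg \<Rightarrow> nat \<Rightarrow> nat \<Rightarrow> 'g \<Rightarrow> 'g" where
  "sR_pow C 0 m x = x"
| "sR_pow C (Suc b) m x = csR C (m + b) (sR_pow C b m x)"

primrec s_pow :: "'g csg \<Rightarrow> nat \<Rightarrow> nat \<Rightarrow> nat \<Rightarrow> 'g \<Rightarrow> 'g" where
  "s_pow C 0 n i x = x"
| "s_pow C (Suc k) n i x = cs C (n + k) i (s_pow C k n i x)"

text \<open>1_a [+] beta [+] 1_b = s_L^a (s_R^b beta), for beta in G_m.\<close>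
definition boxp :: "'g csg \<Rightarrow> nat \<Rightarrow> nat \<Rightarrow> nat \<Rightarrow> 'g \<Rightarrow> 'g" where
  "boxp C a m b \<beta> = sL_pow C a (m + b) (sR_pow C b m \<beta>)"

text \<open>alpha o_i beta = (1_i [+] beta [+] 1_(n-i)) . s_i^m(alpha), alpha in G_n, beta in G_m.\<close>
definition opc :: "'g csg \<Rightarrow> nat \<Rightarrow> nat \<Rightarrow> nat \<Rightarrow> 'g \<Rightarrow> 'g \<Rightarrow> 'g" where
  "opc C n m i \<alpha> \<beta> = cmul C (n + m) (boxp C i m (n - i) \<beta>) (s_pow C m n i \<alpha>)"

definition monoidal_csg :: "'g csg \<Rightarrow> bool" where
  "monoidal_csg C \<longleftrightarrow> ambi_contractible C \<and>
    (\<forall>n m \<alpha> \<alpha>' \<beta> \<beta>'. \<alpha> \<in> cG C n \<longrightarrow> \<alpha>' \<in> cG C n \<longrightarrow> \<beta> \<in> cG C m \<longrightarrow> \<beta>' \<in> cG C m \<longrightarrow>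
       cmul C (n + m + 1) (sR_pow C (m + 1) n (cmul C n \<alpha> \<alpha>'))
                          (sL_pow C (n + 1) m (cmul C m \<beta> \<beta>')) =
       cmul C (n + m + 1)
         (cmul C (n + m + 1) (sR_pow C (m + 1) n \<alpha>) (sL_pow C (n + 1) m \<beta>))
         (cmul C (n + m + 1) (sR_pow C (m + 1) n \<alpha>') (sL_pow C (n + 1) m \<beta>')))"

definition operadic_csg :: "'g csg \<Rightarrow> bool" where
  "operadic_csg C \<longleftrightarrow> monoidal_csg C \<and>
    (\<forall>n m i \<alpha> \<beta>. \<alpha> \<in> cG C n \<longrightarrow> \<beta> \<in> cG C m \<longrightarrow> i \<le> n \<longrightarrow>
       cmul C (n + m) (boxp C i m (n - i) \<beta>) (s_pow C m n i \<alpha>) =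
       cmul C (n + m) (s_pow C m n i \<alpha>)
         (boxp C (cact C n (cinv C n \<alpha>) i) m (n - cact C n (cinv C n \<alpha>) i) \<beta>))"

section \<open>Graded groupoids with faces and partial compositions\<close>

record ('o, 'm) gpd_op =
  oObj   :: "nat \<Rightarrow> 'o set"
  oMor   :: "nat \<Rightarrow> 'm set"
  osrc   :: "nat \<Rightarrow> 'm \<Rightarrow> 'o"
  otgt   :: "nat \<Rightarrow> 'm \<Rightarrow> 'o"
  ocmp   :: "nat \<Rightarrow> 'm \<Rightarrow> 'm \<Rightarrow> 'm"   \<comment> \<open>ocmp n g f = g . f  (f first)\<close>
  oid    :: "nat \<Rightarrow> 'o \<Rightarrow> 'm"
  ofaceO :: "nat \<Rightarrow> nat \<Rightarrow> 'o \<Rightarrow> 'o"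
  ofaceM :: "nat \<Rightarrow> nat \<Rightarrow> 'm \<Rightarrow> 'm"
  ocircO :: "nat \<Rightarrow> nat \<Rightarrow> nat \<Rightarrow> 'o \<Rightarrow> 'o \<Rightarrow> 'o"
  ocircM :: "nat \<Rightarrow> nat \<Rightarrow> nat \<Rightarrow> 'm \<Rightarrow> 'm \<Rightarrow> 'm"

definition is_groupoid :: "('o, 'm) gpd_op \<Rightarrow> nat \<Rightarrow> bool" where
  "is_groupoid U n \<longleftrightarrow>
    (\<forall>f \<in> oMor U n. osrc U n f \<in> oObj U n \<and> otgt U n f \<in> oObj U n) \<and>
    (\<forall>x \<in> oObj U n. oid U n x \<in> oMor U n \<and> osrc U n (oid U n x) = x \<and> otgt U n (oid U n x) = x) \<and>
    (\<forall>f \<in> oMor U n. \<forall>g \<in> oMor U n. otgt U n f = osrc U n g \<longrightarrow>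
        ocmp U n g f \<in> oMor U n \<and> osrc U n (ocmp U n g f) = osrc U n f \<and>
        otgt U n (ocmp U n g f) = otgt U n g) \<and>
    (\<forall>f \<in> oMor U n. \<forall>g \<in> oMor U n. \<forall>h \<in> oMor U n.
        otgt U n f = osrc U n g \<longrightarrow> otgt U n g = osrc U n h \<longrightarrow>
        ocmp U n h (ocmp U n g f) = ocmp U n (ocmp U n h g) f) \<and>
    (\<forall>f \<in> oMor U n. ocmp U n f (oid U n (osrc U n f)) = f \<and>
                     ocmp U n (oid U n (otgt U n f)) f = f) \<and>
    (\<forall>f \<in> oMor U n. \<exists>g \<in> oMor U n. osrc U n g = otgt U n f \<and> otgt U n g = osrc U n f \<and>
        ocmp U n g f = oid U n (osrc U n f) \<and> ocmp U n f g = oid U n (otgt U n f))"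

definition face_functor :: "('o, 'm) gpd_op \<Rightarrow> nat \<Rightarrow> nat \<Rightarrow> bool" where
  "face_functor U n j \<longleftrightarrow>
    (\<forall>x \<in> oObj U n. ofaceO U n j x \<in> oObj U (n - 1)) \<and>
    (\<forall>f \<in> oMor U n. ofaceM U n j f \<in> oMor U (n - 1) \<and>
        osrc U (n - 1) (ofaceM U n j f) = ofaceO U n j (osrc U n f) \<and>
        otgt U (n - 1) (ofaceM U n j f) = ofaceO U n j (otgt U n f)) \<and>
    (\<forall>f \<in> oMor U n. \<forall>g \<in> oMor U n. otgt U n f = osrc U n g \<longrightarrow>
        ofaceM U n j (ocmp U n g f) = ocmp U (n - 1) (ofaceM U n j g) (ofaceM U n j f)) \<and>
    (\<forall>x \<in> oObj U n. ofaceM U n j (oid U n x) = oid U (n - 1) (ofaceO U n j x))"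

definition circ_functor :: "('o, 'm) gpd_op \<Rightarrow> nat \<Rightarrow> nat \<Rightarrow> nat \<Rightarrow> bool" where
  "circ_functor U n m i \<longleftrightarrow>
    (\<forall>x \<in> oObj U n. \<forall>y \<in> oObj U m. ocircO U n m i x y \<in> oObj U (n + m)) \<and>
    (\<forall>f \<in> oMor U n. \<forall>g \<in> oMor U m. ocircM U n m i f g \<in> oMor U (n + m) \<and>
        osrc U (n + m) (ocircM U n m i f g) = ocircO U n m i (osrc U n f) (osrc U m g) \<and>
        otgt U (n + m) (ocircM U n m i f g) = ocircO U n m i (otgt U n f) (otgt U m g)) \<and>
    (\<forall>f \<in> oMor U n. \<forall>f' \<in> oMor U n. \<forall>g \<in> oMor U m. \<forall>g' \<in> oMor U m.
        otgt U n f = osrc U n f' \<longrightarrow> otgt U m g = osrc U m g' \<longrightarrow>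
        ocircM U n m i (ocmp U n f' f) (ocmp U m g' g) =
        ocmp U (n + m) (ocircM U n m i f' g') (ocircM U n m i f g)) \<and>
    (\<forall>x \<in> oObj U n. \<forall>y \<in> oObj U m.
        ocircM U n m i (oid U n x) (oid U m y) = oid U (n + m) (ocircO U n m i x y))"

text \<open>Shifted operad in Gpd (cartesian product): a semi-simplicial groupoid with
functors o_i satisfying unit, associativity, commutativity and face axioms;
the axioms (equalities of functors) are stated on objects and on morphisms.\<close>
definition shifted_operad_gpd :: "('o, 'm) gpd_op \<Rightarrow> bool" where
  "shifted_operad_gpd U \<longleftrightarrow>
    (\<forall>n. is_groupoid U n) \<and>
    (\<forall>n j. 1 \<le> n \<longrightarrow> j \<le> n \<longrightarrow> face_functor U n j) \<and>
    (\<forall>n i j x. 2 \<le> n \<longrightarrow> i < j \<longrightarrow> j \<le> n \<longrightarrow> x \<in> oObj U n \<longrightarrow>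
        ofaceO U (n - 1) i (ofaceO U n j x) = ofaceO U (n - 1) (j - 1) (ofaceO U n i x)) \<and>
    (\<forall>n i j f. 2 \<le> n \<longrightarrow> i < j \<longrightarrow> j \<le> n \<longrightarrow> f \<in> oMor U n \<longrightarrow>
        ofaceM U (n - 1) i (ofaceM U n j f) = ofaceM U (n - 1) (j - 1) (ofaceM U n i f)) \<and>
    (\<forall>n m i. i \<le> n \<longrightarrow> circ_functor U n m i) \<and>
    \<comment> \<open>unit\<close>
    (\<exists>e \<in> oObj U 0.
       (\<forall>m. \<forall>y \<in> oObj U m. ocircO U 0 m 0 e y = y) \<and>
       (\<forall>m. \<forall>g \<in> oMor U m. ocircM U 0 m 0 (oid U 0 e) g = g) \<and>
       (\<forall>n i. \<forall>x \<in> oObj U n. i \<le> n \<longrightarrow> ocircO U n 0 i x e = x) \<and>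
       (\<forall>n i. \<forall>f \<in> oMor U n. i \<le> n \<longrightarrow> ocircM U n 0 i f (oid U 0 e) = f)) \<and>
    \<comment> \<open>associativity\<close>
    (\<forall>l m n i j. \<forall>x \<in> oObj U l. \<forall>y \<in> oObj U m. \<forall>z \<in> oObj U n. i \<le> l \<longrightarrow> j \<le> m \<longrightarrow>
        ocircO U (l + m) n (i + j) (ocircO U l m i x y) z =
        ocircO U l (m + n) i x (ocircO U m n j y z)) \<and>
    (\<forall>l m n i j. \<forall>x \<in> oMor U l. \<forall>y \<in> oMor U m. \<forall>z \<in> oMor U n. i \<le> l \<longrightarrow> j \<le> m \<longrightarrow>
        ocircM U (l + m) n (i + j) (ocircM U l m i x y) z =
        ocircM U l (m + n) i x (ocircM U m n j y z)) \<and>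
    \<comment> \<open>commutativity\<close>
    (\<forall>l m n i k. \<forall>x \<in> oObj U l. \<forall>y \<in> oObj U m. \<forall>z \<in> oObj U n. i < k \<longrightarrow> k \<le> l \<longrightarrow>
        ocircO U (l + m) n (k + m) (ocircO U l m i x y) z =
        ocircO U (l + n) m i (ocircO U l n k x z) y) \<and>
    (\<forall>l m n i k. \<forall>x \<in> oMor U l. \<forall>y \<in> oMor U m. \<forall>z \<in> oMor U n. i < k \<longrightarrow> k \<le> l \<longrightarrow>
        ocircM U (l + m) n (k + m) (ocircM U l m i x y) z =
        ocircM U (l + n) m i (ocircM U l n k x z) y) \<and>
    \<comment> \<open>faces: d_(i+j)(x o_i y) = x o_i d_j(y)\<close>
    (\<forall>l m i j. \<forall>x \<in> oObj U l. \<forall>y \<in> oObj U m. 1 \<le> m \<longrightarrow> i \<le> l \<longrightarrow> j \<le> m \<longrightarrow>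
        ofaceO U (l + m) (i + j) (ocircO U l m i x y) = ocircO U l (m - 1) i x (ofaceO U m j y)) \<and>
    (\<forall>l m i j. \<forall>x \<in> oMor U l. \<forall>y \<in> oMor U m. 1 \<le> m \<longrightarrow> i \<le> l \<longrightarrow> j \<le> m \<longrightarrow>
        ofaceM U (l + m) (i + j) (ocircM U l m i x y) = ocircM U l (m - 1) i x (ofaceM U m j y)) \<and>
    \<comment> \<open>faces: d_i(x o_k z) = d_i(x) o_(k-1) z for i < k\<close>
    (\<forall>l n i k. \<forall>x \<in> oObj U l. \<forall>z \<in> oObj U n. i < k \<longrightarrow> k \<le> l \<longrightarrow>
        ofaceO U (l + n) i (ocircO U l n k x z) = ocircO U (l - 1) n (k - 1) (ofaceO U l i x) z) \<and>
    (\<forall>l n i k. \<forall>x \<in> oMor U l. \<forall>z \<in> oMor U n. i < k \<longrightarrow> k \<le> l \<longrightarrow>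
        ofaceM U (l + n) i (ocircM U l n k x z) = ocircM U (l - 1) n (k - 1) (ofaceM U l i x) z) \<and>
    \<comment> \<open>faces: d_(k+m)(x o_i y) = d_k(x) o_i y for i < k\<close>
    (\<forall>l m i k. \<forall>x \<in> oObj U l. \<forall>y \<in> oObj U m. i < k \<longrightarrow> k \<le> l \<longrightarrow>
        ofaceO U (l + m) (k + m) (ocircO U l m i x y) = ocircO U (l - 1) m i (ofaceO U l k x) y) \<and>
    (\<forall>l m i k. \<forall>x \<in> oMor U l. \<forall>y \<in> oMor U m. i < k \<longrightarrow> k \<le> l \<longrightarrow>
        ofaceM U (l + m) (k + m) (ocircM U l m i x y) = ocircM U (l - 1) m i (ofaceM U l k x) y)"

section \<open>The action groupoids Gamma_n = G_n // P_n\<close>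

text \<open>Objects: sigma in S_n (= G_n/P_n). Morphisms [sigma,f] : sigma -> sigma pi(f)^-1,
with pi(f) = cact C n f.\<close>
definition Gamma :: "'g csg \<Rightarrow> (nat \<Rightarrow> nat, (nat \<Rightarrow> nat) \<times> 'g) gpd_op" where
  "Gamma C = \<lparr>
     oObj = (\<lambda>n. Bij {..n}),
     oMor = (\<lambda>n. Bij {..n} \<times> cG C n),
     osrc = (\<lambda>n p. fst p),
     otgt = (\<lambda>n p. mult (BijGroup {..n}) (fst p) (pinv n (cact C n (snd p)))),
     ocmp = (\<lambda>n q p. (fst p, cmul C n (snd q) (snd p))),
     oid = (\<lambda>n \<sigma>. (\<sigma>, cone C n)),
     ofaceO = (\<lambda>n j \<sigma>. sym_face n j \<sigma>),
     ofaceM = (\<lambda>n j p. (sym_face n j (fst p),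
                  cinv C (n - 1) (cd C n (pinv n (fst p) j) (cinv C n (snd p))))),
     ocircO = (\<lambda>n m i \<sigma> \<tau>. opc Sym n m i \<sigma> \<tau>),
     ocircM = (\<lambda>n m i p q. (opc Sym n m i (fst p) (fst q),
                  cinv C (n + m) (opc C n m (pinv n (fst p) i) (cinv C n (snd p)) (cinv C m (snd q)))))
   \<rparr>"

end

theory Submission
  imports Defs
begin

(* A morphism of Gamma_n is a pair [sigma, f]; on objects o_i is the operad composition of S_*,
   on the group components it is the operad composition of G_* applied to inverses at the
   index sigma^-1(i). Every axiom of a shifted operad therefore splits into an
   identity in S_* and an identity in G_* whose indices are moved around by sigma^-1.
   In G_* these identities follow from the simplicial identities for the iterated degeneracies
   and contractions, together with two interchange laws: the monoidal one (blocks sitting in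
   disjoint positions commute) and the operadic one (a block can be moved across s_i^m alpha,
   which is also what makes o_i a functor). As G_* is symmetric, cact maps G_n onto S_n
   compatibly with all the structure, so each identity in S_* is the image of the corresponding
   identity in G_*. *)

section \<open>Bijections of an initial segment\<close>

lemma Bij_atMost_le: "\<sigma> \<in> Bij {..n} \<Longrightarrow> x \<le> n \<Longrightarrow> \<sigma> x \<le> n"
  using Bij_imp_funcset by fastforce

lemma BijGroup_mult_apply:
  "\<sigma> \<in> Bij {..n} \<Longrightarrow> \<tau> \<in> Bij {..n} \<Longrightarrow> x \<le> n \<Longrightarrow> mult (BijGroup {..n}) \<sigma> \<tau> x = \<sigma> (\<tau> x)"
  by (simp add: BijGroup_def compose_def)

lemma BijGroup_one_apply: "x \<le> n \<Longrightarrow> one (BijGroup {..n}) x = x"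
  by (simp add: BijGroup_def)

lemma carrier_BijGroup: "carrier (BijGroup S) = Bij S"
  by (simp add: BijGroup_def)

lemma BijGroup_mult_Bij: "\<sigma> \<in> Bij S \<Longrightarrow> \<tau> \<in> Bij S \<Longrightarrow> mult (BijGroup S) \<sigma> \<tau> \<in> Bij S"
  by (simp add: BijGroup_def compose_Bij)

lemma BijGroup_one_Bij: "one (BijGroup S) \<in> Bij S"
  by (simp add: BijGroup_def id_Bij)

lemma BijGroup_mult_assoc:
  "\<sigma> \<in> Bij S \<Longrightarrow> \<tau> \<in> Bij S \<Longrightarrow> \<rho> \<in> Bij S \<Longrightarrow>
   mult (BijGroup S) (mult (BijGroup S) \<sigma> \<tau>) \<rho> = mult (BijGroup S) \<sigma> (mult (BijGroup S) \<tau> \<rho>)"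
  using group.is_monoid[OF group_BijGroup] monoid.m_assoc carrier_BijGroup by metis

lemma BijGroup_mult_one: "\<sigma> \<in> Bij S \<Longrightarrow> mult (BijGroup S) \<sigma> (one (BijGroup S)) = \<sigma>"
  using group.is_monoid[OF group_BijGroup] monoid.r_one carrier_BijGroup by metis

lemma pinv_Bij: "\<sigma> \<in> Bij {..n} \<Longrightarrow> pinv n \<sigma> \<in> Bij {..n}"
  by (simp add: pinv_def inv_BijGroup restrict_inv_into_Bij)

lemma pinv_f_f: "\<sigma> \<in> Bij {..n} \<Longrightarrow> x \<le> n \<Longrightarrow> pinv n \<sigma> (\<sigma> x) = x"
  by (simp add: pinv_def inv_BijGroup Bij_atMost_le Bij_def bij_betw_def)

lemma f_pinv_f: "\<sigma> \<in> Bij {..n} \<Longrightarrow> y \<le> n \<Longrightarrow> \<sigma> (pinv n \<sigma> y) = y"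
  by (simp add: pinv_def inv_BijGroup Bij_def bij_betw_def f_inv_into_f)

lemma pinv_le: "\<sigma> \<in> Bij {..n} \<Longrightarrow> y \<le> n \<Longrightarrow> pinv n \<sigma> y \<le> n"
  by (rule Bij_atMost_le[OF pinv_Bij])

lemma pinv_eqI: "\<sigma> \<in> Bij {..n} \<Longrightarrow> x \<le> n \<Longrightarrow> \<sigma> x = y \<Longrightarrow> pinv n \<sigma> y = x"
  using pinv_f_f by blast

lemma pinv_mult:
  "\<sigma> \<in> Bij {..n} \<Longrightarrow> \<tau> \<in> Bij {..n} \<Longrightarrow>
   pinv n (mult (BijGroup {..n}) \<sigma> \<tau>) = mult (BijGroup {..n}) (pinv n \<tau>) (pinv n \<sigma>)"
  unfolding pinv_def using group.inv_mult_group[OF group_BijGroup] by (simp add: carrier_BijGroup)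

lemma pinv_pinv: "\<sigma> \<in> Bij {..n} \<Longrightarrow> pinv n (pinv n \<sigma>) = \<sigma>"
  unfolding pinv_def using group.inv_inv[OF group_BijGroup] by (simp add: carrier_BijGroup)

lemma pinv_one: "pinv n (one (BijGroup {..n})) = one (BijGroup {..n})"
  unfolding pinv_def using monoid.inv_one[OF group.is_monoid[OF group_BijGroup[of "{..n}"]]] by simp

lemma BijGroup_pinv_mult: "\<sigma> \<in> Bij {..n} \<Longrightarrow> mult (BijGroup {..n}) (pinv n \<sigma>) \<sigma> = one (BijGroup {..n})"
  unfolding pinv_def using group.l_inv[OF group_BijGroup] by (simp add: carrier_BijGroup)

lemma pinv_sym_degen:
  "\<rho> \<in> Bij {..N} \<Longrightarrow> sym_degen N i \<rho> \<in> Bij {..Suc N} \<Longrightarrow> i \<le> N \<Longrightarrow>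
   pinv (Suc N) (sym_degen N i \<rho>) i = pinv N \<rho> i"
  using pinv_le[of \<rho> N i] by (intro pinv_eqI) (simp_all add: sym_degen_def Let_def)

lemma Sym_simps:
  "cmul Sym n = mult (BijGroup {..n})" "cs Sym = sym_degen" "csL Sym = sym_sL" "csR Sym = sym_sR"
  by (simp_all add: Sym_def)

lemma sL_pow_Sym_apply: "y \<le> M + a \<Longrightarrow> sL_pow Sym a M z y = (if y < a then y else a + z (y - a))"
proof (induction a arbitrary: y)
  case 0 then show ?case by simp
next
  case (Suc a)
  show ?case
  proof (cases "y = 0")
    case True then show ?thesis by (simp add: Sym_simps sym_sL_def)
  next
    case False
    have "sL_pow Sym (Suc a) M z y = Suc (sL_pow Sym a M z (y - 1))"
      using Suc.prems False by (simp add: Sym_simps sym_sL_def)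
    also have "\<dots> = Suc (if y - 1 < a then y - 1 else a + z (y - 1 - a))"
      using Suc.prems by (subst Suc.IH) auto
    finally show ?thesis using False by auto
  qed
qed

lemma sR_pow_Sym_apply: "y \<le> M + b \<Longrightarrow> sR_pow Sym b M z y = (if y \<le> M then z y else y)"
proof (induction b arbitrary: y)
  case 0 then show ?case by simp
next
  case (Suc b)
  then show ?case by (cases "y = Suc (M + b)") (simp_all add: Sym_simps sym_sR_def)
qed

lemma boxp_Sym_apply:
  "y \<le> m + b + a \<Longrightarrow>
   boxp Sym a m b \<tau> y = (if y < a then y else if y \<le> a + m then a + \<tau> (y - a) else y)"
  unfolding boxp_def by (subst sL_pow_Sym_apply) (auto simp: sR_pow_Sym_apply)

section \<open>Operadic crossed simplicial groups\<close>

locale operadic_crossed_simplicial_group =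
  fixes C :: "'g csg"
  assumes operadic: "operadic_csg C"
begin

lemma is_monoidal: "monoidal_csg C"
  using operadic by (simp add: operadic_csg_def)

lemma is_ambi_contractible: "ambi_contractible C"
  using is_monoidal by (simp add: monoidal_csg_def)

lemma is_symmetric: "symmetric_csg C"
  using is_ambi_contractible by (simp add: ambi_contractible_def)

lemmas csg_axioms =
  is_symmetric[unfolded symmetric_csg_def, THEN conjunct1, unfolded crossed_simplicial_group_def]

lemmas ambi_axioms = is_ambi_contractible[unfolded ambi_contractible_def]

lemma cact_surj: "\<sigma> \<in> Bij {..n} \<Longrightarrow> \<exists>g\<in>cG C n. cact C n g = \<sigma>"
  using is_symmetric unfolding symmetric_csg_def by (metis imageE)

lemma group_grp: "group (grp C n)"
  using csg_axioms by meson

lemma cact_hom: "cact C n \<in> hom (grp C n) (BijGroup {..n})"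
  using csg_axioms by meson

lemma cd_closed:
  assumes "i \<le> Suc n" "g \<in> cG C (Suc n)"
  shows "cd C (Suc n) i g \<in> cG C n"
proof -
  have "\<forall>i g. 1 \<le> Suc n \<longrightarrow> i \<le> Suc n \<longrightarrow> g \<in> cG C (Suc n) \<longrightarrow> cd C (Suc n) i g \<in> cG C (Suc n - 1)"
    using csg_axioms by meson
  with assms show ?thesis by simp
qed

lemma cs_closed: "i \<le> n \<Longrightarrow> g \<in> cG C n \<Longrightarrow> cs C n i g \<in> cG C (Suc n)"
  using csg_axioms by meson

lemma cd_cd:
  assumes "i < j" "j \<le> Suc (Suc n)" "g \<in> cG C (Suc (Suc n))"
  shows "cd C (Suc n) i (cd C (Suc (Suc n)) j g) = cd C (Suc n) (j - 1) (cd C (Suc (Suc n)) i g)"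
proof -
  have "\<forall>i j g. 2 \<le> Suc (Suc n) \<longrightarrow> i < j \<longrightarrow> j \<le> Suc (Suc n) \<longrightarrow> g \<in> cG C (Suc (Suc n)) \<longrightarrow>
    cd C (Suc (Suc n) - 1) i (cd C (Suc (Suc n)) j g) =
    cd C (Suc (Suc n) - 1) (j - 1) (cd C (Suc (Suc n)) i g)"
    using csg_axioms by meson
  with assms show ?thesis by simp
qed

lemma cs_cs:
  "i \<le> j \<Longrightarrow> j \<le> n \<Longrightarrow> g \<in> cG C n \<Longrightarrow>
   cs C (Suc n) i (cs C n j g) = cs C (Suc n) (Suc j) (cs C n i g)"
  using csg_axioms by meson

lemma cd_cs_less:
  assumes "i < j" "j \<le> Suc n" "g \<in> cG C (Suc n)"
  shows "cd C (Suc (Suc n)) i (cs C (Suc n) j g) = cs C n (j - 1) (cd C (Suc n) i g)"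
proof -
  have "\<forall>i j g. i < j \<longrightarrow> j \<le> Suc n \<longrightarrow> g \<in> cG C (Suc n) \<longrightarrow>
    cd C (Suc (Suc n)) i (cs C (Suc n) j g) = cs C (Suc n - 1) (j - 1) (cd C (Suc n) i g)"
    using csg_axioms by meson
  with assms show ?thesis by simp
qed

lemma cd_cs_same: "j \<le> n \<Longrightarrow> g \<in> cG C n \<Longrightarrow> cd C (Suc n) j (cs C n j g) = g"
  using csg_axioms by meson

lemma cd_Suc_cs_same: "j \<le> n \<Longrightarrow> g \<in> cG C n \<Longrightarrow> cd C (Suc n) (Suc j) (cs C n j g) = g"
  using csg_axioms by meson

lemma cd_cs_greater:
  assumes "Suc j < i" "i \<le> Suc (Suc n)" "g \<in> cG C (Suc n)"
  shows "cd C (Suc (Suc n)) i (cs C (Suc n) j g) = cs C n j (cd C (Suc n) (i - 1) g)"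
proof -
  have "\<forall>i j g. Suc j < i \<longrightarrow> i \<le> Suc (Suc n) \<longrightarrow> g \<in> cG C (Suc n) \<longrightarrow>
    cd C (Suc (Suc n)) i (cs C (Suc n) j g) = cs C (Suc n - 1) j (cd C (Suc n) (i - 1) g)"
    using csg_axioms by meson
  with assms show ?thesis by simp
qed

lemma cd_cmul:
  assumes "i \<le> Suc n" "g \<in> cG C (Suc n)" "h \<in> cG C (Suc n)"
  shows "cd C (Suc n) i (cmul C (Suc n) g h) =
    cmul C n (cd C (Suc n) i g) (cd C (Suc n) (cact C (Suc n) (cinv C (Suc n) g) i) h)"
proof -
  have "\<forall>i g h. 1 \<le> Suc n \<longrightarrow> i \<le> Suc n \<longrightarrow> g \<in> cG C (Suc n) \<longrightarrow> h \<in> cG C (Suc n) \<longrightarrow>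
    cd C (Suc n) i (cmul C (Suc n) g h) =
    cmul C (Suc n - 1) (cd C (Suc n) i g) (cd C (Suc n) (cact C (Suc n) (cinv C (Suc n) g) i) h)"
    using csg_axioms by meson
  with assms show ?thesis by simp
qed

lemma cs_cmul:
  "i \<le> n \<Longrightarrow> g \<in> cG C n \<Longrightarrow> h \<in> cG C n \<Longrightarrow>
   cs C n i (cmul C n g h) = cmul C (Suc n) (cs C n i g) (cs C n (cact C n (cinv C n g) i) h)"
  using csg_axioms by meson

lemma cact_cd:
  assumes "i \<le> Suc n" "g \<in> cG C (Suc n)"
  shows "cact C n (cd C (Suc n) i g) = sym_face (Suc n) i (cact C (Suc n) g)"
proof -
  have "\<forall>i g. 1 \<le> Suc n \<longrightarrow> i \<le> Suc n \<longrightarrow> g \<in> cG C (Suc n) \<longrightarrow>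
    cact C (Suc n - 1) (cd C (Suc n) i g) = sym_face (Suc n) i (cact C (Suc n) g)"
    using csg_axioms by meson
  with assms show ?thesis by simp
qed

lemma cact_cs:
  "i \<le> n \<Longrightarrow> g \<in> cG C n \<Longrightarrow> cact C (Suc n) (cs C n i g) = sym_degen n i (cact C n g)"
  using csg_axioms by meson

lemma csL_closed: "g \<in> cG C n \<Longrightarrow> csL C n g \<in> cG C (Suc n)"
  using ambi_axioms by meson

lemma csR_closed: "g \<in> cG C n \<Longrightarrow> csR C n g \<in> cG C (Suc n)"
  using ambi_axioms by meson

lemma csL_cmul:
  "g \<in> cG C n \<Longrightarrow> h \<in> cG C n \<Longrightarrow> csL C n (cmul C n g h) = cmul C (Suc n) (csL C n g) (csL C n h)"
  using ambi_axioms by meson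

lemma csR_cmul:
  "g \<in> cG C n \<Longrightarrow> h \<in> cG C n \<Longrightarrow> csR C n (cmul C n g h) = cmul C (Suc n) (csR C n g) (csR C n h)"
  using ambi_axioms by meson

lemma cact_csL: "g \<in> cG C n \<Longrightarrow> cact C (Suc n) (csL C n g) = sym_sL n (cact C n g)"
  using ambi_axioms by meson

lemma cact_csR: "g \<in> cG C n \<Longrightarrow> cact C (Suc n) (csR C n g) = sym_sR n (cact C n g)"
  using ambi_axioms by meson

lemma cd_0_csL: "g \<in> cG C n \<Longrightarrow> cd C (Suc n) 0 (csL C n g) = g"
  using ambi_axioms by meson

lemma cd_Suc_csL:
  assumes "i \<le> Suc n" "g \<in> cG C (Suc n)"
  shows "cd C (Suc (Suc n)) (Suc i) (csL C (Suc n) g) = csL C n (cd C (Suc n) i g)"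
proof -
  have "\<forall>i g. 1 \<le> Suc n \<longrightarrow> 1 \<le> Suc i \<longrightarrow> Suc i \<le> Suc (Suc n) \<longrightarrow> g \<in> cG C (Suc n) \<longrightarrow>
    cd C (Suc (Suc n)) (Suc i) (csL C (Suc n) g) = csL C (Suc n - 1) (cd C (Suc n) (Suc i - 1) g)"
    using ambi_axioms by meson
  with assms show ?thesis by simp
qed

lemma csL_cs:
  "j \<le> n \<Longrightarrow> g \<in> cG C n \<Longrightarrow> csL C (Suc n) (cs C n j g) = cs C (Suc n) (Suc j) (csL C n g)"
  using ambi_axioms by meson

lemma csL_csL: "g \<in> cG C n \<Longrightarrow> csL C (Suc n) (csL C n g) = cs C (Suc n) 0 (csL C n g)"
  using ambi_axioms by meson

lemma cd_top_csR: "g \<in> cG C n \<Longrightarrow> cd C (Suc n) (Suc n) (csR C n g) = g"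
  using ambi_axioms by meson

lemma cd_csR:
  assumes "i \<le> Suc n" "g \<in> cG C (Suc n)"
  shows "cd C (Suc (Suc n)) i (csR C (Suc n) g) = csR C n (cd C (Suc n) i g)"
proof -
  have "\<forall>i g. 1 \<le> Suc n \<longrightarrow> i \<le> Suc n \<longrightarrow> g \<in> cG C (Suc n) \<longrightarrow>
    cd C (Suc (Suc n)) i (csR C (Suc n) g) = csR C (Suc n - 1) (cd C (Suc n) i g)"
    using ambi_axioms by meson
  with assms show ?thesis by simp
qed

lemma cs_csR:
  "i \<le> n \<Longrightarrow> g \<in> cG C n \<Longrightarrow> cs C (Suc n) i (csR C n g) = csR C (Suc n) (cs C n i g)"
  using ambi_axioms by meson

lemma cs_top_csR: "g \<in> cG C n \<Longrightarrow> cs C (Suc n) (Suc n) (csR C n g) = csR C (Suc n) (csR C n g)"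
  using ambi_axioms by meson

lemma csL_csR: "g \<in> cG C n \<Longrightarrow> csL C (Suc n) (csR C n g) = csR C (Suc n) (csL C n g)"
  using ambi_axioms by meson

lemma monoidal_interchange:
  "\<alpha> \<in> cG C n \<Longrightarrow> \<alpha>' \<in> cG C n \<Longrightarrow> \<beta> \<in> cG C m \<Longrightarrow> \<beta>' \<in> cG C m \<Longrightarrow>
   cmul C (n + m + 1) (sR_pow C (m + 1) n (cmul C n \<alpha> \<alpha>')) (sL_pow C (n + 1) m (cmul C m \<beta> \<beta>')) =
   cmul C (n + m + 1)
     (cmul C (n + m + 1) (sR_pow C (m + 1) n \<alpha>) (sL_pow C (n + 1) m \<beta>))
     (cmul C (n + m + 1) (sR_pow C (m + 1) n \<alpha>') (sL_pow C (n + 1) m \<beta>'))"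
  using is_monoidal unfolding monoidal_csg_def by blast

lemma operadic_interchange:
  "\<alpha> \<in> cG C n \<Longrightarrow> \<beta> \<in> cG C m \<Longrightarrow> i \<le> n \<Longrightarrow>
   cmul C (n + m) (boxp C i m (n - i) \<beta>) (s_pow C m n i \<alpha>) =
   cmul C (n + m) (s_pow C m n i \<alpha>)
     (boxp C (cact C n (cinv C n \<alpha>) i) m (n - cact C n (cinv C n \<alpha>) i) \<beta>)"
  using operadic unfolding operadic_csg_def by blast

lemma cmul_closed: "x \<in> cG C n \<Longrightarrow> y \<in> cG C n \<Longrightarrow> cmul C n x y \<in> cG C n"
  using group.subgroup_self[OF group_grp] subgroup.m_closed by (fastforce simp: grp_def)

lemma cone_closed: "cone C n \<in> cG C n"
  using group.subgroup_self[OF group_grp] subgroup.one_closed by (fastforce simp: grp_def)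

lemma cmul_assoc:
  "x \<in> cG C n \<Longrightarrow> y \<in> cG C n \<Longrightarrow> z \<in> cG C n \<Longrightarrow>
   cmul C n (cmul C n x y) z = cmul C n x (cmul C n y z)"
  using group.is_monoid[OF group_grp, of n] monoid.m_assoc by (fastforce simp: grp_def)

lemma cmul_cone_left: "x \<in> cG C n \<Longrightarrow> cmul C n (cone C n) x = x"
  using group.is_monoid[OF group_grp, of n] monoid.l_one by (fastforce simp: grp_def)

lemma cmul_cone_right: "x \<in> cG C n \<Longrightarrow> cmul C n x (cone C n) = x"
  using group.is_monoid[OF group_grp, of n] monoid.r_one by (fastforce simp: grp_def)

lemma cinv_closed: "x \<in> cG C n \<Longrightarrow> cinv C n x \<in> cG C n"
  using group.inv_closed[OF group_grp, of x n] by (simp add: grp_def cinv_def)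

lemma cmul_cinv_left: "x \<in> cG C n \<Longrightarrow> cmul C n (cinv C n x) x = cone C n"
  using group.l_inv[OF group_grp, of x n] by (simp add: grp_def cinv_def)

lemma cmul_cinv_right: "x \<in> cG C n \<Longrightarrow> cmul C n x (cinv C n x) = cone C n"
  using group.r_inv[OF group_grp, of x n] by (simp add: grp_def cinv_def)

lemma cinv_cmul:
  "x \<in> cG C n \<Longrightarrow> y \<in> cG C n \<Longrightarrow> cinv C n (cmul C n x y) = cmul C n (cinv C n y) (cinv C n x)"
  using group.inv_mult_group[OF group_grp, of x n y] by (simp add: grp_def cinv_def)

lemma cinv_cinv: "x \<in> cG C n \<Longrightarrow> cinv C n (cinv C n x) = x"
  using group.inv_inv[OF group_grp, of x n] by (simp add: grp_def cinv_def)

lemma cinv_cone: "cinv C n (cone C n) = cone C n"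
  using monoid.inv_one[OF group.is_monoid[OF group_grp], of n] by (simp add: grp_def cinv_def)

lemma idempotent_eq_cone: "x \<in> cG C n \<Longrightarrow> cmul C n x x = x \<Longrightarrow> x = cone C n"
  by (metis cinv_closed cmul_assoc cmul_cinv_left cmul_cone_left)

lemma group_hom_cact: "group_hom (grp C n) (BijGroup {..n}) (cact C n)"
  by (intro group_hom.intro group_hom_axioms.intro group_grp group_BijGroup cact_hom)

lemma cact_Bij: "g \<in> cG C n \<Longrightarrow> cact C n g \<in> Bij {..n}"
  using cact_hom[of n] by (auto simp: hom_def grp_def carrier_BijGroup)

lemma cact_cmul:
  "g \<in> cG C n \<Longrightarrow> h \<in> cG C n \<Longrightarrow>
   cact C n (cmul C n g h) = mult (BijGroup {..n}) (cact C n g) (cact C n h)"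
  using cact_hom[of n] by (auto simp: hom_def grp_def)

lemma cact_cone: "cact C n (cone C n) = one (BijGroup {..n})"
  using group_hom.hom_one[OF group_hom_cact[of n]] by (simp add: grp_def)

lemma cact_cinv: "g \<in> cG C n \<Longrightarrow> cact C n (cinv C n g) = pinv n (cact C n g)"
  using group_hom.hom_inv[OF group_hom_cact[of n], of g] by (simp add: grp_def cinv_def pinv_def)

lemma pinv_cact_cinv: "g \<in> cG C n \<Longrightarrow> pinv n (cact C n (cinv C n g)) = cact C n g"
  by (simp add: cact_cinv pinv_pinv cact_Bij)

lemma cact_cinv_le: "g \<in> cG C n \<Longrightarrow> i \<le> n \<Longrightarrow> cact C n (cinv C n g) i \<le> n"
  by (simp add: cact_cinv pinv_le cact_Bij)

lemma cs_cone: "i \<le> n \<Longrightarrow> cs C n i (cone C n) = cone C (Suc n)"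
  using cs_cmul[OF _ cone_closed cone_closed, of i n]
  by (intro idempotent_eq_cone cs_closed cone_closed)
     (simp_all add: cmul_cone_left cone_closed cinv_cone cact_cone BijGroup_one_apply)

lemma cd_cone: "i \<le> Suc n \<Longrightarrow> cd C (Suc n) i (cone C (Suc n)) = cone C n"
  using cd_cmul[OF _ cone_closed cone_closed, of i n]
  by (intro idempotent_eq_cone cd_closed cone_closed)
     (simp_all add: cmul_cone_left cone_closed cinv_cone cact_cone BijGroup_one_apply)

lemma csL_cone: "csL C n (cone C n) = cone C (Suc n)"
  using csL_cmul[OF cone_closed cone_closed, of n]
  by (intro idempotent_eq_cone csL_closed cone_closed) (simp add: cmul_cone_left cone_closed)

lemma csR_cone: "csR C n (cone C n) = cone C (Suc n)"
  using csR_cmul[OF cone_closed cone_closed, of n]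
  by (intro idempotent_eq_cone csR_closed cone_closed) (simp add: cmul_cone_left cone_closed)

lemma s_pow_closed: "i \<le> n \<Longrightarrow> g \<in> cG C n \<Longrightarrow> s_pow C m n i g \<in> cG C (n + m)"
  by (induction m) (simp_all add: cs_closed)

lemma sL_pow_closed: "x \<in> cG C m \<Longrightarrow> sL_pow C a m x \<in> cG C (m + a)"
  by (induction a) (simp_all add: csL_closed)

lemma sR_pow_closed: "x \<in> cG C m \<Longrightarrow> sR_pow C b m x \<in> cG C (m + b)"
  by (induction b) (simp_all add: csR_closed)

lemma boxp_closed: "\<beta> \<in> cG C m \<Longrightarrow> N = m + b + a \<Longrightarrow> boxp C a m b \<beta> \<in> cG C N"
  by (simp add: boxp_def sL_pow_closed sR_pow_closed)

lemma opc_closed: "i \<le> n \<Longrightarrow> \<alpha> \<in> cG C n \<Longrightarrow> \<beta> \<in> cG C m \<Longrightarrow> opc C n m i \<alpha> \<beta> \<in> cG C (n + m)"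
  unfolding opc_def by (rule cmul_closed[OF boxp_closed s_pow_closed]) auto

lemma sL_pow_cmul: "x \<in> cG C m \<Longrightarrow> y \<in> cG C m \<Longrightarrow>
  sL_pow C a m (cmul C m x y) = cmul C (m + a) (sL_pow C a m x) (sL_pow C a m y)"
  by (induction a) (simp_all add: csL_cmul sL_pow_closed)

lemma sR_pow_cmul: "x \<in> cG C m \<Longrightarrow> y \<in> cG C m \<Longrightarrow>
  sR_pow C a m (cmul C m x y) = cmul C (m + a) (sR_pow C a m x) (sR_pow C a m y)"
  by (induction a) (simp_all add: csR_cmul sR_pow_closed)

lemma boxp_cmul: "x \<in> cG C m \<Longrightarrow> y \<in> cG C m \<Longrightarrow> N = m + b + a \<Longrightarrow>
  boxp C a m b (cmul C m x y) = cmul C N (boxp C a m b x) (boxp C a m b y)"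
  by (simp add: boxp_def sR_pow_cmul sL_pow_cmul sR_pow_closed)

lemma sL_pow_cone: "sL_pow C a m (cone C m) = cone C (m + a)"
  by (induction a) (simp_all add: csL_cone)

lemma sR_pow_cone: "sR_pow C a m (cone C m) = cone C (m + a)"
  by (induction a) (simp_all add: csR_cone)

lemma boxp_cone: "N = m + b + a \<Longrightarrow> boxp C a m b (cone C m) = cone C N"
  by (simp add: boxp_def sR_pow_cone sL_pow_cone)

lemma s_pow_cone: "i \<le> n \<Longrightarrow> s_pow C m n i (cone C n) = cone C (n + m)"
  by (induction m) (simp_all add: cs_cone)

lemma cact_s_pow: "i \<le> n \<Longrightarrow> g \<in> cG C n \<Longrightarrow>
  cact C (n + m) (s_pow C m n i g) = s_pow Sym m n i (cact C n g)"
  by (induction m) (simp_all add: cact_cs s_pow_closed Sym_simps)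

lemma cact_sL_pow: "x \<in> cG C m \<Longrightarrow> cact C (m + a) (sL_pow C a m x) = sL_pow Sym a m (cact C m x)"
  by (induction a) (simp_all add: cact_csL sL_pow_closed Sym_simps)

lemma cact_sR_pow: "x \<in> cG C m \<Longrightarrow> cact C (m + a) (sR_pow C a m x) = sR_pow Sym a m (cact C m x)"
  by (induction a) (simp_all add: cact_csR sR_pow_closed Sym_simps)

lemma cact_boxp: "\<beta> \<in> cG C m \<Longrightarrow> N = m + b + a \<Longrightarrow>
  cact C N (boxp C a m b \<beta>) = boxp Sym a m b (cact C m \<beta>)"
  by (simp add: boxp_def cact_sL_pow cact_sR_pow sR_pow_closed)

lemma cact_opc:
  assumes "i \<le> n" "\<alpha> \<in> cG C n" "\<beta> \<in> cG C m"
  shows "cact C (n + m) (opc C n m i \<alpha> \<beta>) = opc Sym n m i (cact C n \<alpha>) (cact C m \<beta>)"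
proof -
  have b: "boxp C i m (n - i) \<beta> \<in> cG C (n + m)" by (rule boxp_closed) (use assms in auto)
  have pb: "cact C (n + m) (boxp C i m (n - i) \<beta>) = boxp Sym i m (n - i) (cact C m \<beta>)"
    by (rule cact_boxp) (use assms in auto)
  show ?thesis
    unfolding opc_def using assms b pb
    by (simp add: cact_cmul s_pow_closed cact_s_pow Sym_simps)
qed

lemma pinv_cact_s_pow:
  assumes "i \<le> n" "g \<in> cG C n"
  shows "pinv (n + k) (cact C (n + k) (s_pow C k n i g)) i = pinv n (cact C n g) i"
proof (induction k)
  case (Suc k)
  let ?g = "s_pow C k n i g"
  have g: "?g \<in> cG C (n + k)" using assms s_pow_closed by blast
  then have "cact C (Suc (n + k)) (cs C (n + k) i ?g) \<in> Bij {..Suc (n + k)}"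
    using assms by (intro cact_Bij cs_closed) auto
  with Suc g assms show ?case
    using pinv_sym_degen[of "cact C (n + k) ?g" "n + k" i] by (simp add: cact_Bij cact_cs)
qed simp

lemma s_pow_cmul: "i \<le> n \<Longrightarrow> x \<in> cG C n \<Longrightarrow> y \<in> cG C n \<Longrightarrow>
  s_pow C m n i (cmul C n x y) =
  cmul C (n + m) (s_pow C m n i x) (s_pow C m n (cact C n (cinv C n x) i) y)"
proof (induction m)
  case 0 then show ?case by simp
next
  case (Suc k)
  define c where "c = cact C n (cinv C n x) i"
  have c: "c \<le> n" unfolding c_def using Suc by (simp add: cact_cinv_le)
  have X: "s_pow C k n i x \<in> cG C (n + k)" using Suc s_pow_closed by blast
  have Y: "s_pow C k n c y \<in> cG C (n + k)" using Suc s_pow_closed c by blast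
  have ci: "cact C (n + k) (cinv C (n + k) (s_pow C k n i x)) i = c"
    unfolding c_def using Suc X by (simp add: cact_cinv pinv_cact_s_pow)
  have "s_pow C (Suc k) n i (cmul C n x y) =
      cs C (n + k) i (cmul C (n + k) (s_pow C k n i x) (s_pow C k n c y))"
    using Suc by (simp add: c_def)
  also have "\<dots> =
      cmul C (Suc (n + k)) (cs C (n + k) i (s_pow C k n i x)) (cs C (n + k) c (s_pow C k n c y))"
    using cs_cmul[OF _ X Y, of i] Suc ci by simp
  finally show ?case by (simp add: c_def)
qed

lemma sL_pow_add: "sL_pow C (a + a') m x = sL_pow C a' (m + a) (sL_pow C a m x)"
  by (induction a') (simp_all add: add.assoc)

lemma sR_pow_add: "sR_pow C (a + a') m x = sR_pow C a' (m + a) (sR_pow C a m x)"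
  by (induction a') (simp_all add: add.assoc)

lemma csR_sL_pow: "z \<in> cG C M \<Longrightarrow> N = M + a \<Longrightarrow> csR C N (sL_pow C a M z) = sL_pow C a (Suc M) (csR C M z)"
proof (induction a arbitrary: N)
  case 0 then show ?case by simp
next
  case (Suc a)
  have Y: "sL_pow C a M z \<in> cG C (M + a)" using Suc sL_pow_closed by blast
  have "csR C N (sL_pow C (Suc a) M z) = csR C (Suc (M + a)) (csL C (M + a) (sL_pow C a M z))"
    using Suc by simp
  also have "\<dots> = csL C (Suc (M + a)) (csR C (M + a) (sL_pow C a M z))" using csL_csR[OF Y] by simp
  also have "\<dots> = sL_pow C (Suc a) (Suc M) (csR C M z)" using Suc by simp
  finally show ?case .
qed

lemma sR_pow_sL_pow: "z \<in> cG C M \<Longrightarrow> sR_pow C r (M + a) (sL_pow C a M z) = sL_pow C a (M + r) (sR_pow C r M z)"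
proof (induction r)
  case 0 then show ?case by simp
next
  case (Suc r)
  have Y: "sR_pow C r M z \<in> cG C (M + r)" using Suc sR_pow_closed by blast
  have "sR_pow C (Suc r) (M + a) (sL_pow C a M z) =
      csR C (M + a + r) (sL_pow C a (M + r) (sR_pow C r M z))"
    using Suc by simp
  also have "\<dots> = sL_pow C a (Suc (M + r)) (csR C (M + r) (sR_pow C r M z))"
    by (rule csR_sL_pow[OF Y]) simp
  finally show ?case by simp
qed

lemma cs_sL_pow: "z \<in> cG C m \<Longrightarrow> p \<le> m \<Longrightarrow> N = m + a \<Longrightarrow>
  cs C N (a + p) (sL_pow C a m z) = sL_pow C a (Suc m) (cs C m p z)"
proof (induction a arbitrary: N)
  case 0 then show ?case by simp
next
  case (Suc a)
  have Y: "sL_pow C a m z \<in> cG C (m + a)" using Suc sL_pow_closed by blast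
  have "cs C N (Suc a + p) (sL_pow C (Suc a) m z) =
      cs C (Suc (m + a)) (Suc (a + p)) (csL C (m + a) (sL_pow C a m z))"
    using Suc by simp
  also have "\<dots> = csL C (Suc (m + a)) (cs C (m + a) (a + p) (sL_pow C a m z))"
    using csL_cs[OF _ Y, of "a + p"] Suc by simp
  also have "\<dots> = sL_pow C (Suc a) (Suc m) (cs C m p z)" using Suc by simp
  finally show ?case .
qed

lemma s_pow_sL_pow: "z \<in> cG C m \<Longrightarrow> p \<le> m \<Longrightarrow>
  s_pow C n (m + a) (a + p) (sL_pow C a m z) = sL_pow C a (m + n) (s_pow C n m p z)"
proof (induction n)
  case 0 then show ?case by simp
next
  case (Suc n)
  have Y: "s_pow C n m p z \<in> cG C (m + n)" using Suc s_pow_closed by blast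
  have "s_pow C (Suc n) (m + a) (a + p) (sL_pow C a m z) =
      cs C (m + a + n) (a + p) (sL_pow C a (m + n) (s_pow C n m p z))"
    using Suc by simp
  also have "\<dots> = sL_pow C a (Suc (m + n)) (cs C (m + n) p (s_pow C n m p z))"
    by (rule cs_sL_pow[OF Y]) (use Suc in auto)
  finally show ?case by simp
qed

lemma cs_sR_pow: "z \<in> cG C m \<Longrightarrow> p \<le> m \<Longrightarrow> N = m + r \<Longrightarrow>
  cs C N p (sR_pow C r m z) = sR_pow C r (Suc m) (cs C m p z)"
proof (induction r arbitrary: N)
  case 0 then show ?case by simp
next
  case (Suc r)
  have Y: "sR_pow C r m z \<in> cG C (m + r)" using Suc sR_pow_closed by blast
  have "cs C N p (sR_pow C (Suc r) m z) = cs C (Suc (m + r)) p (csR C (m + r) (sR_pow C r m z))"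
    using Suc by simp
  also have "\<dots> = csR C (Suc (m + r)) (cs C (m + r) p (sR_pow C r m z))"
    using cs_csR[OF _ Y, of p] Suc by simp
  also have "\<dots> = sR_pow C (Suc r) (Suc m) (cs C m p z)" using Suc by simp
  finally show ?case .
qed

lemma s_pow_sR_pow: "z \<in> cG C m \<Longrightarrow> p \<le> m \<Longrightarrow>
  s_pow C n (m + r) p (sR_pow C r m z) = sR_pow C r (m + n) (s_pow C n m p z)"
proof (induction n)
  case 0 then show ?case by simp
next
  case (Suc n)
  have Y: "s_pow C n m p z \<in> cG C (m + n)" using Suc s_pow_closed by blast
  have "s_pow C (Suc n) (m + r) p (sR_pow C r m z) =
      cs C (m + r + n) p (sR_pow C r (m + n) (s_pow C n m p z))"
    using Suc by simp
  also have "\<dots> = sR_pow C r (Suc (m + n)) (cs C (m + n) p (s_pow C n m p z))"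
    by (rule cs_sR_pow[OF Y]) (use Suc in auto)
  finally show ?case by simp
qed

lemma s_pow_boxp_inside:
  assumes "\<beta> \<in> cG C m" "b \<le> m"
  shows "s_pow C n (m + r + a) (a + b) (boxp C a m r \<beta>) = boxp C a (m + n) r (s_pow C n m b \<beta>)"
proof -
  have Z: "sR_pow C r m \<beta> \<in> cG C (m + r)" using assms sR_pow_closed by blast
  have "s_pow C n (m + r + a) (a + b) (boxp C a m r \<beta>) =
      sL_pow C a (m + r + n) (s_pow C n (m + r) b (sR_pow C r m \<beta>))"
    unfolding boxp_def using s_pow_sL_pow[OF Z, of b n a] assms by simp
  also have "\<dots> = sL_pow C a (m + r + n) (sR_pow C r (m + n) (s_pow C n m b \<beta>))"
    using s_pow_sR_pow[OF assms] by simp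
  also have "m + r + n = m + n + r" by simp
  finally show ?thesis unfolding boxp_def .
qed

lemma cs_sR_pow_padding: "z \<in> cG C m \<Longrightarrow> m < p \<Longrightarrow> p \<le> m + r \<Longrightarrow>
  cs C (m + r) p (sR_pow C r m z) = sR_pow C (Suc r) m z"
proof (induction r)
  case 0 then show ?case by simp
next
  case (Suc r)
  have Y: "sR_pow C r m z \<in> cG C (m + r)" using Suc sR_pow_closed by blast
  show ?case
  proof (cases "p = Suc (m + r)")
    case True
    then show ?thesis using cs_top_csR[OF Y] by simp
  next
    case False
    then have "p \<le> m + r" using Suc by simp
    then show ?thesis using cs_csR[OF _ Y, of p] Suc by simp
  qed
qed

lemma s_pow_sR_pow_padding: "z \<in> cG C m \<Longrightarrow> m < p \<Longrightarrow> p \<le> m + r \<Longrightarrow>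
  s_pow C n (m + r) p (sR_pow C r m z) = sR_pow C (r + n) m z"
proof (induction n)
  case 0 then show ?case by simp
next
  case (Suc n)
  have "s_pow C (Suc n) (m + r) p (sR_pow C r m z) = cs C (m + (r + n)) p (sR_pow C (r + n) m z)"
    using Suc by (simp add: add.assoc)
  also have "\<dots> = sR_pow C (Suc (r + n)) m z" by (rule cs_sR_pow_padding) (use Suc in auto)
  finally show ?case by simp
qed

lemma cs_sL_pow_padding: "z \<in> cG C M \<Longrightarrow> p < a \<Longrightarrow>
  cs C (M + a) p (sL_pow C a M z) = sL_pow C (Suc a) M z"
proof (induction a arbitrary: p)
  case 0 then show ?case by simp
next
  case (Suc a)
  have Y: "sL_pow C a M z \<in> cG C (M + a)" using Suc sL_pow_closed by blast
  show ?case
  proof (cases p)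
    case 0
    then show ?thesis using csL_csL[OF Y] by simp
  next
    case (Suc p')
    then have "p' < a" using Suc.prems by simp
    have "cs C (M + Suc a) p (sL_pow C (Suc a) M z) =
        cs C (Suc (M + a)) (Suc p') (csL C (M + a) (sL_pow C a M z))"
      using Suc by simp
    also have "\<dots> = csL C (Suc (M + a)) (cs C (M + a) p' (sL_pow C a M z))"
      using csL_cs[OF _ Y, of p'] \<open>p' < a\<close> by simp
    also have "\<dots> = csL C (Suc (M + a)) (sL_pow C (Suc a) M z)"
      using Suc.IH[OF Suc.prems(1) \<open>p' < a\<close>] by simp
    finally show ?thesis by simp
  qed
qed

lemma s_pow_sL_pow_padding: "z \<in> cG C M \<Longrightarrow> p < a \<Longrightarrow>
  s_pow C n (M + a) p (sL_pow C a M z) = sL_pow C (a + n) M z"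
proof (induction n)
  case 0 then show ?case by simp
next
  case (Suc n)
  have "s_pow C (Suc n) (M + a) p (sL_pow C a M z) = cs C (M + (a + n)) p (sL_pow C (a + n) M z)"
    using Suc by (simp add: add.assoc)
  also have "\<dots> = sL_pow C (Suc (a + n)) M z" by (rule cs_sL_pow_padding) (use Suc in auto)
  finally show ?case by simp
qed

lemma cs_s_pow_inside: "\<alpha> \<in> cG C l \<Longrightarrow> a \<le> l \<Longrightarrow> c \<le> m \<Longrightarrow>
  cs C (l + m) (a + c) (s_pow C m l a \<alpha>) = s_pow C (Suc m) l a \<alpha>"
proof (induction m arbitrary: c)
  case 0 then show ?case by simp
next
  case (Suc m)
  have Y: "s_pow C m l a \<alpha> \<in> cG C (l + m)" using Suc s_pow_closed by blast
  show ?case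
  proof (cases c)
    case 0 then show ?thesis by simp
  next
    case (Suc c')
    then have c': "c' \<le> m" using Suc.prems by simp
    have "cs C (l + Suc m) (a + c) (s_pow C (Suc m) l a \<alpha>) =
        cs C (Suc (l + m)) (Suc (a + c')) (cs C (l + m) a (s_pow C m l a \<alpha>))"
      using Suc by simp
    also have "\<dots> = cs C (Suc (l + m)) a (cs C (l + m) (a + c') (s_pow C m l a \<alpha>))"
      using cs_cs[OF _ _ Y, of a "a + c'"] Suc.prems c' by simp
    also have "\<dots> = cs C (Suc (l + m)) a (s_pow C (Suc m) l a \<alpha>)"
      using Suc.IH[OF Suc.prems(1,2) c'] by simp
    finally show ?thesis by simp
  qed
qed

lemma s_pow_s_pow_inside: "\<alpha> \<in> cG C l \<Longrightarrow> a \<le> l \<Longrightarrow> c \<le> m \<Longrightarrow>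
  s_pow C n (l + m) (a + c) (s_pow C m l a \<alpha>) = s_pow C (m + n) l a \<alpha>"
proof (induction n)
  case 0 then show ?case by simp
next
  case (Suc n)
  have "s_pow C (Suc n) (l + m) (a + c) (s_pow C m l a \<alpha>) =
      cs C (l + (m + n)) (a + c) (s_pow C (m + n) l a \<alpha>)"
    using Suc by (simp add: add.assoc)
  also have "\<dots> = s_pow C (Suc (m + n)) l a \<alpha>" by (rule cs_s_pow_inside) (use Suc in auto)
  finally show ?case by simp
qed

lemma cs_s_pow_commute: "y \<in> cG C l \<Longrightarrow> a \<le> p \<Longrightarrow> p \<le> l \<Longrightarrow> N = l + m \<Longrightarrow>
  cs C N (p + m) (s_pow C m l a y) = s_pow C m (Suc l) a (cs C l p y)"
proof (induction m arbitrary: N)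
  case 0 then show ?case by simp
next
  case (Suc m)
  have Y: "s_pow C m l a y \<in> cG C (l + m)" using Suc s_pow_closed by (meson order_trans)
  have "cs C N (p + Suc m) (s_pow C (Suc m) l a y) =
      cs C (Suc (l + m)) (Suc (p + m)) (cs C (l + m) a (s_pow C m l a y))"
    using Suc by simp
  also have "\<dots> = cs C (Suc (l + m)) a (cs C (l + m) (p + m) (s_pow C m l a y))"
    using cs_cs[OF _ _ Y, of a "p + m"] Suc.prems by simp
  also have "\<dots> = cs C (Suc (l + m)) a (s_pow C m (Suc l) a (cs C l p y))"
    using Suc.IH[OF Suc.prems(1-3)] by simp
  finally show ?case by simp
qed

lemma s_pow_s_pow_commute: "\<alpha> \<in> cG C l \<Longrightarrow> a \<le> b \<Longrightarrow> b \<le> l \<Longrightarrow>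
  s_pow C n (l + m) (b + m) (s_pow C m l a \<alpha>) = s_pow C m (l + n) a (s_pow C n l b \<alpha>)"
proof (induction n)
  case 0 then show ?case by simp
next
  case (Suc n)
  have Y: "s_pow C n l b \<alpha> \<in> cG C (l + n)" using Suc s_pow_closed by blast
  have "s_pow C (Suc n) (l + m) (b + m) (s_pow C m l a \<alpha>) =
      cs C (l + m + n) (b + m) (s_pow C m (l + n) a (s_pow C n l b \<alpha>))"
    using Suc by simp
  also have "\<dots> = s_pow C m (Suc (l + n)) a (cs C (l + n) b (s_pow C n l b \<alpha>))"
    by (rule cs_s_pow_commute[OF Y]) (use Suc in auto)
  finally show ?case by simp
qed

lemma cd_s_pow_inside: "\<alpha> \<in> cG C l \<Longrightarrow> a \<le> l \<Longrightarrow> c \<le> Suc m \<Longrightarrow>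
  cd C (l + Suc m) (a + c) (s_pow C (Suc m) l a \<alpha>) = s_pow C m l a \<alpha>"
proof (induction m arbitrary: c)
  case 0
  then consider "c = 0" | "c = 1" by linarith
  then show ?case using 0 cd_cs_same[of a l \<alpha>] cd_Suc_cs_same[of a l \<alpha>] by cases simp_all
next
  case (Suc m)
  have Y: "s_pow C (Suc m) l a \<alpha> \<in> cG C (Suc (l + m))" using Suc s_pow_closed[of a l \<alpha> "Suc m"] by simp
  have e: "cd C (l + Suc (Suc m)) (a + c) (s_pow C (Suc (Suc m)) l a \<alpha>) =
     cd C (Suc (Suc (l + m))) (a + c) (cs C (Suc (l + m)) a (s_pow C (Suc m) l a \<alpha>))" by simp
  consider "c = 0" | "c = 1" | "2 \<le> c" by linarith
  then show ?case
  proof cases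
    case 1 then show ?thesis using e cd_cs_same[OF _ Y, of a] Suc by simp
  next
    case 2 then show ?thesis using e cd_Suc_cs_same[OF _ Y, of a] Suc by simp
  next
    case 3
    have "cd C (Suc (Suc (l + m))) (a + c) (cs C (Suc (l + m)) a (s_pow C (Suc m) l a \<alpha>))
       = cs C (l + m) a (cd C (Suc (l + m)) (a + c - 1) (s_pow C (Suc m) l a \<alpha>))"
      using cd_cs_greater[OF _ _ Y, of a "a + c"] 3 Suc.prems by simp
    also have "a + c - 1 = a + (c - 1)" using 3 by simp
    also have "cd C (Suc (l + m)) (a + (c - 1)) (s_pow C (Suc m) l a \<alpha>) = s_pow C m l a \<alpha>"
      using Suc.IH[OF Suc.prems(1,2), of "c - 1"] Suc.prems by simp
    finally show ?thesis using e by simp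
  qed
qed

lemma cd_s_pow_below: "\<alpha> \<in> cG C (Suc l) \<Longrightarrow> c < b \<Longrightarrow> b \<le> Suc l \<Longrightarrow>
  cd C (Suc l + n) c (s_pow C n (Suc l) b \<alpha>) = s_pow C n l (b - 1) (cd C (Suc l) c \<alpha>)"
proof (induction n)
  case 0 then show ?case by simp
next
  case (Suc n)
  have Y: "s_pow C n (Suc l) b \<alpha> \<in> cG C (Suc (l + n))" using Suc s_pow_closed[of b "Suc l" \<alpha> n] by simp
  have "cd C (Suc l + Suc n) c (s_pow C (Suc n) (Suc l) b \<alpha>) =
      cd C (Suc (Suc (l + n))) c (cs C (Suc (l + n)) b (s_pow C n (Suc l) b \<alpha>))"
    by simp
  also have "\<dots> = cs C (l + n) (b - 1) (cd C (Suc (l + n)) c (s_pow C n (Suc l) b \<alpha>))"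
    using cd_cs_less[OF _ _ Y, of c b] Suc.prems by simp
  also have "\<dots> = cs C (l + n) (b - 1) (s_pow C n l (b - 1) (cd C (Suc l) c \<alpha>))"
    using Suc.IH Suc.prems by simp
  finally show ?case by simp
qed

lemma cd_s_pow_above: "\<alpha> \<in> cG C (Suc l) \<Longrightarrow> b < c \<Longrightarrow> c \<le> Suc l \<Longrightarrow>
  cd C (Suc l + n) (c + n) (s_pow C n (Suc l) b \<alpha>) = s_pow C n l b (cd C (Suc l) c \<alpha>)"
proof (induction n)
  case 0 then show ?case by simp
next
  case (Suc n)
  have Y: "s_pow C n (Suc l) b \<alpha> \<in> cG C (Suc (l + n))" using Suc s_pow_closed[of b "Suc l" \<alpha> n] by simp
  have "cd C (Suc l + Suc n) (c + Suc n) (s_pow C (Suc n) (Suc l) b \<alpha>) =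
      cd C (Suc (Suc (l + n))) (c + Suc n) (cs C (Suc (l + n)) b (s_pow C n (Suc l) b \<alpha>))"
    by simp
  also have "\<dots> = cs C (l + n) b (cd C (Suc (l + n)) (c + n) (s_pow C n (Suc l) b \<alpha>))"
    using cd_cs_greater[OF _ _ Y, of b "c + Suc n"] Suc.prems by simp
  also have "\<dots> = cs C (l + n) b (s_pow C n l b (cd C (Suc l) c \<alpha>))"
    using Suc.IH Suc.prems by simp
  finally show ?case by simp
qed

lemma cd_sL_pow_padding: "z \<in> cG C M \<Longrightarrow> c < a \<Longrightarrow> cd C (M + a) c (sL_pow C a M z) = sL_pow C (a - 1) M z"
proof (induction a arbitrary: c)
  case 0 then show ?case by simp
next
  case (Suc a)
  have Y: "sL_pow C a M z \<in> cG C (M + a)" using Suc sL_pow_closed by blast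
  show ?case
  proof (cases c)
    case 0 then show ?thesis using cd_0_csL[OF Y] by simp
  next
    case (Suc c')
    then have c': "c' < a" using Suc.prems by simp
    then obtain a' where a': "a = Suc a'" by (cases a) auto
    have Y': "sL_pow C a M z \<in> cG C (Suc (M + a'))" using Y a' by simp
    have "cd C (M + Suc a) c (sL_pow C (Suc a) M z) =
        cd C (Suc (Suc (M + a'))) (Suc c') (csL C (Suc (M + a')) (sL_pow C a M z))"
      using Suc a' by simp
    also have "\<dots> = csL C (M + a') (cd C (Suc (M + a')) c' (sL_pow C a M z))"
      using cd_Suc_csL[OF _ Y', of c'] c' a' by simp
    also have "cd C (Suc (M + a')) c' (sL_pow C a M z) = sL_pow C a' M z"
      using Suc.IH[OF Suc.prems(1) c'] a' by simp
    finally show ?thesis using a' by simp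
  qed
qed

lemma cd_sL_pow: "z \<in> cG C (Suc M) \<Longrightarrow> p \<le> Suc M \<Longrightarrow>
  cd C (Suc M + a) (a + p) (sL_pow C a (Suc M) z) = sL_pow C a M (cd C (Suc M) p z)"
proof (induction a)
  case 0 then show ?case by simp
next
  case (Suc a)
  have Y: "sL_pow C a (Suc M) z \<in> cG C (Suc (M + a))" using Suc sL_pow_closed[of z "Suc M" a] by simp
  have "cd C (Suc M + Suc a) (Suc a + p) (sL_pow C (Suc a) (Suc M) z) =
      cd C (Suc (Suc (M + a))) (Suc (a + p)) (csL C (Suc (M + a)) (sL_pow C a (Suc M) z))"
    by simp
  also have "\<dots> = csL C (M + a) (cd C (Suc (M + a)) (a + p) (sL_pow C a (Suc M) z))"
    using cd_Suc_csL[OF _ Y, of "a + p"] Suc.prems by simp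
  also have "\<dots> = csL C (M + a) (sL_pow C a M (cd C (Suc M) p z))" using Suc by simp
  finally show ?case by simp
qed

lemma cd_sR_pow: "z \<in> cG C (Suc M) \<Longrightarrow> p \<le> Suc M \<Longrightarrow>
  cd C (Suc M + r) p (sR_pow C r (Suc M) z) = sR_pow C r M (cd C (Suc M) p z)"
proof (induction r)
  case 0 then show ?case by simp
next
  case (Suc r)
  have Y: "sR_pow C r (Suc M) z \<in> cG C (Suc (M + r))" using Suc sR_pow_closed[of z "Suc M" r] by simp
  have "cd C (Suc M + Suc r) p (sR_pow C (Suc r) (Suc M) z) =
      cd C (Suc (Suc (M + r))) p (csR C (Suc (M + r)) (sR_pow C r (Suc M) z))"
    by simp
  also have "\<dots> = csR C (M + r) (cd C (Suc (M + r)) p (sR_pow C r (Suc M) z))"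
    using cd_csR[OF _ Y, of p] Suc.prems by simp
  also have "\<dots> = csR C (M + r) (sR_pow C r M (cd C (Suc M) p z))" using Suc by simp
  finally show ?case by simp
qed

lemma cd_sR_pow_padding: "z \<in> cG C M \<Longrightarrow> M < p \<Longrightarrow> p \<le> M + Suc r \<Longrightarrow>
  cd C (M + Suc r) p (sR_pow C (Suc r) M z) = sR_pow C r M z"
proof (induction r)
  case 0
  then have "p = Suc M" by simp
  then show ?case using cd_top_csR[OF 0(1)] by simp
next
  case (Suc r)
  have Y: "sR_pow C (Suc r) M z \<in> cG C (Suc (M + r))" using Suc sR_pow_closed[of z M "Suc r"] by simp
  show ?case
  proof (cases "p = M + Suc (Suc r)")
    case True then show ?thesis using cd_top_csR[OF Y] by simp
  next
    case False
    then have p: "p \<le> Suc (M + r)" using Suc.prems by simp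
    have "cd C (M + Suc (Suc r)) p (sR_pow C (Suc (Suc r)) M z) =
        cd C (Suc (Suc (M + r))) p (csR C (Suc (M + r)) (sR_pow C (Suc r) M z))"
      by simp
    also have "\<dots> = csR C (M + r) (cd C (Suc (M + r)) p (sR_pow C (Suc r) M z))"
      using cd_csR[OF p Y] by simp
    also have "\<dots> = csR C (M + r) (sR_pow C r M z)" using Suc.IH Suc.prems p by simp
    finally show ?thesis by simp
  qed
qed

lemma cd_boxp_inside:
  assumes "\<beta> \<in> cG C (Suc m)" "b \<le> Suc m"
  shows "cd C (Suc m + r + a) (a + b) (boxp C a (Suc m) r \<beta>) = boxp C a m r (cd C (Suc m) b \<beta>)"
proof -
  have Z: "sR_pow C r (Suc m) \<beta> \<in> cG C (Suc (m + r))" using assms sR_pow_closed[of \<beta> "Suc m" r] by simp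
  have "cd C (Suc m + r + a) (a + b) (boxp C a (Suc m) r \<beta>) =
     cd C (Suc (m + r) + a) (a + b) (sL_pow C a (Suc (m + r)) (sR_pow C r (Suc m) \<beta>))"
    by (simp add: boxp_def)
  also have "\<dots> = sL_pow C a (m + r) (cd C (Suc (m + r)) b (sR_pow C r (Suc m) \<beta>))"
    using cd_sL_pow[OF Z, of b a] assms by simp
  also have "cd C (Suc (m + r)) b (sR_pow C r (Suc m) \<beta>) = sR_pow C r m (cd C (Suc m) b \<beta>)"
    using cd_sR_pow[OF assms] by simp
  finally show ?thesis by (simp add: boxp_def)
qed

lemma cd_boxp_below: "\<beta> \<in> cG C m \<Longrightarrow> c < a \<Longrightarrow>
  cd C (m + r + a) c (boxp C a m r \<beta>) = boxp C (a - 1) m r \<beta>"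
  unfolding boxp_def by (rule cd_sL_pow_padding[OF sR_pow_closed])

lemma cd_boxp_above:
  assumes "\<beta> \<in> cG C m" "a + m < c" "c \<le> a + m + Suc r"
  shows "cd C (m + Suc r + a) c (boxp C a m (Suc r) \<beta>) = boxp C a m r \<beta>"
proof -
  define p where "p = c - a"
  have cp: "c = a + p" "m < p" "p \<le> Suc (m + r)" using assms unfolding p_def by auto
  have Z: "sR_pow C (Suc r) m \<beta> \<in> cG C (Suc (m + r))" using assms sR_pow_closed[of \<beta> m "Suc r"] by simp
  have "cd C (m + Suc r + a) c (boxp C a m (Suc r) \<beta>) =
     cd C (Suc (m + r) + a) (a + p) (sL_pow C a (Suc (m + r)) (sR_pow C (Suc r) m \<beta>))"
    by (simp add: boxp_def cp)
  also have "\<dots> = sL_pow C a (m + r) (cd C (Suc (m + r)) p (sR_pow C (Suc r) m \<beta>))"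
    using cd_sL_pow[OF Z cp(3)] by simp
  also have "cd C (Suc (m + r)) p (sR_pow C (Suc r) m \<beta>) = sR_pow C r m \<beta>"
    using cd_sR_pow_padding[OF assms(1) cp(2), of r] cp by simp
  finally show ?thesis by (simp add: boxp_def)
qed

lemma cact_cinv_boxp_inside:
  assumes "\<beta> \<in> cG C m" "t \<le> m" "N = m + r + a"
  shows "cact C N (cinv C N (boxp C a m r \<beta>)) (a + t) = a + cact C m (cinv C m \<beta>) t"
proof -
  have B: "boxp C a m r \<beta> \<in> cG C N" using assms boxp_closed by blast
  have pb: "cact C N (boxp C a m r \<beta>) = boxp Sym a m r (cact C m \<beta>)" using assms cact_boxp by blast
  have BS: "boxp Sym a m r (cact C m \<beta>) \<in> Bij {..N}" using pb B cact_Bij by metis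
  have pt: "pinv m (cact C m \<beta>) t \<le> m" using assms pinv_le cact_Bij by blast
  have v: "boxp Sym a m r (cact C m \<beta>) (a + pinv m (cact C m \<beta>) t) = a + t"
    using assms pt by (simp add: boxp_Sym_apply f_pinv_f cact_Bij)
  have e: "cact C N (cinv C N (boxp C a m r \<beta>)) = pinv N (boxp Sym a m r (cact C m \<beta>))"
    by (simp add: cact_cinv[OF B] pb)
  have le: "a + pinv m (cact C m \<beta>) t \<le> N" using assms pt by simp
  show ?thesis
    unfolding e pinv_eqI[OF BS le v] by (simp add: cact_cinv assms(1))
qed

lemma cact_cinv_boxp_outside:
  assumes "\<beta> \<in> cG C m" "N = m + r + a" "x \<le> N" "x < a \<or> a + m < x"
  shows "cact C N (cinv C N (boxp C a m r \<beta>)) x = x"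
proof -
  have B: "boxp C a m r \<beta> \<in> cG C N" using assms boxp_closed by blast
  have pb: "cact C N (boxp C a m r \<beta>) = boxp Sym a m r (cact C m \<beta>)" using assms cact_boxp by blast
  have BS: "boxp Sym a m r (cact C m \<beta>) \<in> Bij {..N}" using pb B cact_Bij by metis
  have v: "boxp Sym a m r (cact C m \<beta>) x = x"
    using assms by (auto simp: boxp_Sym_apply)
  have e: "cact C N (cinv C N (boxp C a m r \<beta>)) = pinv N (boxp Sym a m r (cact C m \<beta>))"
    by (simp add: cact_cinv[OF B] pb)
  show ?thesis
    unfolding e by (rule pinv_eqI[OF BS assms(3) v])
qed

lemma opc_unit_left: "\<beta> \<in> cG C m \<Longrightarrow> opc C 0 m 0 (cone C 0) \<beta> = \<beta>"
  unfolding opc_def using s_pow_cone[of 0 0 m] by (simp add: boxp_def cmul_cone_right)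

lemma opc_unit_right: "\<alpha> \<in> cG C n \<Longrightarrow> i \<le> n \<Longrightarrow> opc C n 0 i \<alpha> (cone C 0) = \<alpha>"
  unfolding opc_def using boxp_cone[of n 0 "n - i" i] by (simp add: cmul_cone_left)

lemma opc_cmul:
  assumes "\<alpha> \<in> cG C n" "\<alpha>' \<in> cG C n" "\<beta> \<in> cG C m" "\<beta>' \<in> cG C m" "i \<le> n"
  shows "opc C n m i (cmul C n \<alpha> \<alpha>') (cmul C m \<beta> \<beta>') =
    cmul C (n + m) (opc C n m i \<alpha> \<beta>) (opc C n m (cact C n (cinv C n \<alpha>) i) \<alpha>' \<beta>')"
proof -
  define c where "c = cact C n (cinv C n \<alpha>) i"
  have c: "c \<le> n" unfolding c_def using assms by (simp add: cact_cinv_le)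
  have B1: "boxp C i m (n - i) \<beta> \<in> cG C (n + m)" using assms by (intro boxp_closed) auto
  have B2: "boxp C i m (n - i) \<beta>' \<in> cG C (n + m)" using assms by (intro boxp_closed) auto
  have B3: "boxp C c m (n - c) \<beta>' \<in> cG C (n + m)" using assms c by (intro boxp_closed) auto
  have S1: "s_pow C m n i \<alpha> \<in> cG C (n + m)" using assms s_pow_closed by blast
  have S2: "s_pow C m n c \<alpha>' \<in> cG C (n + m)" using assms c s_pow_closed by blast
  have "opc C n m i (cmul C n \<alpha> \<alpha>') (cmul C m \<beta> \<beta>') =
    cmul C (n + m) (cmul C (n + m) (boxp C i m (n - i) \<beta>) (boxp C i m (n - i) \<beta>'))
      (cmul C (n + m) (s_pow C m n i \<alpha>) (s_pow C m n c \<alpha>'))"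
  proof -
    have bm: "boxp C i m (n - i) (cmul C m \<beta> \<beta>') =
        cmul C (n + m) (boxp C i m (n - i) \<beta>) (boxp C i m (n - i) \<beta>')"
      by (rule boxp_cmul) (use assms in auto)
    show ?thesis unfolding opc_def c_def using assms by (simp add: bm s_pow_cmul)
  qed
  also have "\<dots> = cmul C (n + m) (boxp C i m (n - i) \<beta>)
      (cmul C (n + m) (cmul C (n + m) (boxp C i m (n - i) \<beta>') (s_pow C m n i \<alpha>)) (s_pow C m n c \<alpha>'))"
    using B1 B2 S1 S2 by (simp add: cmul_assoc cmul_closed)
  also have "cmul C (n + m) (boxp C i m (n - i) \<beta>') (s_pow C m n i \<alpha>) =
     cmul C (n + m) (s_pow C m n i \<alpha>) (boxp C c m (n - c) \<beta>')"
    unfolding c_def using operadic_interchange[OF assms(1) assms(4) assms(5)] .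
  also have "cmul C (n + m) (boxp C i m (n - i) \<beta>)
      (cmul C (n + m) (cmul C (n + m) (s_pow C m n i \<alpha>) (boxp C c m (n - c) \<beta>')) (s_pow C m n c \<alpha>'))
     = cmul C (n + m) (cmul C (n + m) (boxp C i m (n - i) \<beta>) (s_pow C m n i \<alpha>))
        (cmul C (n + m) (boxp C c m (n - c) \<beta>') (s_pow C m n c \<alpha>'))"
    using B1 B3 S1 S2 by (simp add: cmul_assoc cmul_closed)
  finally show ?thesis unfolding opc_def c_def .
qed

lemma boxp_boxp:
  assumes "\<gamma> \<in> cG C n" "M = n + s + b"
  shows "boxp C a M r (boxp C b n s \<gamma>) = boxp C (a + b) n (s + r) \<gamma>"
proof -
  have Z: "sR_pow C s n \<gamma> \<in> cG C (n + s)" using assms sR_pow_closed by blast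
  have "boxp C a M r (boxp C b n s \<gamma>) =
      sL_pow C a (M + r) (sR_pow C r (n + s + b) (sL_pow C b (n + s) (sR_pow C s n \<gamma>)))"
    unfolding boxp_def assms(2) ..
  also have "\<dots> = sL_pow C a (M + r) (sL_pow C b (n + s + r) (sR_pow C r (n + s) (sR_pow C s n \<gamma>)))"
    using sR_pow_sL_pow[OF Z, of r b] by simp
  also have "\<dots> = sL_pow C a (M + r) (sL_pow C b (n + s + r) (sR_pow C (s + r) n \<gamma>))"
    by (simp add: sR_pow_add)
  also have "M + r = n + s + r + b" using assms(2) by simp
  also have "sL_pow C a (n + s + r + b) (sL_pow C b (n + s + r) (sR_pow C (s + r) n \<gamma>)) =
      sL_pow C (b + a) (n + s + r) (sR_pow C (s + r) n \<gamma>)"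
    by (rule sL_pow_add[symmetric])
  finally have "boxp C a M r (boxp C b n s \<gamma>) =
      sL_pow C (b + a) (n + s + r) (sR_pow C (s + r) n \<gamma>)" .
  then show ?thesis by (simp only: boxp_def add.commute[of a b] add.assoc)
qed

lemma sR_pow_boxp:
  assumes "\<beta> \<in> cG C m"
  shows "sR_pow C k (m + t + a) (boxp C a m t \<beta>) = boxp C a m (t + k) \<beta>"
  unfolding boxp_def using sR_pow_sL_pow[OF sR_pow_closed[OF assms, of t], of k a]
  by (simp add: sR_pow_add add.assoc)

lemma sR_pow_sL_pow_cmul_commute:
  assumes "x \<in> cG C n" "y \<in> cG C m"
  shows "cmul C (n + m + 1) (sR_pow C (m + 1) n x) (sL_pow C (n + 1) m y) =
    cmul C (n + m + 1) (sL_pow C (n + 1) m y) (sR_pow C (m + 1) n x)"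
proof -
  let ?N = "n + m + 1"
  have closed: "sR_pow C (m + 1) n x \<in> cG C ?N" "sL_pow C (n + 1) m y \<in> cG C ?N"
    using sR_pow_closed[OF assms(1), of "m + 1"] sL_pow_closed[OF assms(2), of "n + 1"]
    by (simp_all add: ac_simps)
  have units: "sR_pow C (m + 1) n (cone C n) = cone C ?N" "sL_pow C (n + 1) m (cone C m) = cone C ?N"
    using sR_pow_cone[of "m + 1" n] sL_pow_cone[of "n + 1" m] by (simp_all add: ac_simps)
  from monoidal_interchange[OF cone_closed assms cone_closed] show ?thesis
    by (simp only: units cmul_cone_left[OF assms(1)] cmul_cone_right[OF assms(2)]
        cmul_cone_left[OF closed(2)] cmul_cone_right[OF closed(1)])
qed

text \<open>Blocks in disjoint positions are the two factors of a monoidal product, so they commute.\<close>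

lemma boxp_cmul_commute:
  assumes "\<beta> \<in> cG C m" "\<gamma> \<in> cG C n" "a < b" "b \<le> l" "N = l + m + n"
  shows "cmul C N (boxp C (b + m) n (l - b) \<gamma>) (boxp C a m (l + n - a) \<beta>) =
    cmul C N (boxp C a m (l + n - a) \<beta>) (boxp C (b + m) n (l - b) \<gamma>)"
proof -
  define t r where "t = b - a - 1" and "r = l - b"
  have tr: "b = a + Suc t" "l = a + Suc t + r" unfolding t_def r_def using assms by auto
  have x: "boxp C a m t \<beta> \<in> cG C (m + t + a)" using assms by (intro boxp_closed) auto
  have y: "sR_pow C r n \<gamma> \<in> cG C (n + r)" using assms sR_pow_closed by blast
  have "sR_pow C (n + r + 1) (m + t + a) (boxp C a m t \<beta>) = boxp C a m (l + n - a) \<beta>"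
    using sR_pow_boxp[OF assms(1), of "n + r + 1" t a] tr by (simp add: ac_simps)
  moreover have "sL_pow C (m + t + a + 1) (n + r) (sR_pow C r n \<gamma>) = boxp C (b + m) n (l - b) \<gamma>"
    unfolding boxp_def using tr by (simp add: ac_simps)
  moreover have "N = m + t + a + (n + r) + 1" using assms tr by simp
  ultimately show ?thesis using sR_pow_sL_pow_cmul_commute[OF x y] by simp
qed

lemma s_pow_boxp_above:
  assumes "\<beta> \<in> cG C m" "a < b" "b \<le> l"
  shows "s_pow C n (l + m) (b + m) (boxp C a m (l - a) \<beta>) = boxp C a m (l + n - a) \<beta>"
proof -
  have Z: "sR_pow C (l - a) m \<beta> \<in> cG C (m + (l - a))" using assms sR_pow_closed by blast
  have q: "l + m = m + (l - a) + a" "b + m = a + (b + m - a)" using assms by simp_all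
  have "s_pow C n (l + m) (b + m) (boxp C a m (l - a) \<beta>) =
    sL_pow C a (m + (l - a) + n) (s_pow C n (m + (l - a)) (b + m - a) (sR_pow C (l - a) m \<beta>))"
    unfolding boxp_def q(1) by (subst q(2), rule s_pow_sL_pow[OF Z]) (use assms in simp)
  also have "s_pow C n (m + (l - a)) (b + m - a) (sR_pow C (l - a) m \<beta>) = sR_pow C (l + n - a) m \<beta>"
    using s_pow_sR_pow_padding[OF assms(1), of "b + m - a" "l - a" n] assms by simp
  also have "m + (l - a) + n = m + (l + n - a)" using assms by simp
  finally show ?thesis unfolding boxp_def .
qed

lemma s_pow_boxp_below:
  assumes "\<gamma> \<in> cG C n" "a < b" "b \<le> l"
  shows "s_pow C m (l + n) a (boxp C b n (l - b) \<gamma>) = boxp C (b + m) n (l - b) \<gamma>"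
proof -
  have q: "l + n = n + (l - b) + b" using assms by simp
  show ?thesis
    unfolding boxp_def q using s_pow_sL_pow_padding[OF sR_pow_closed[OF assms(1), of "l - b"] assms(2), of m]
    by (simp add: add.commute)
qed

lemma s_pow_opc_inside:
  assumes "\<alpha> \<in> cG C l" "\<beta> \<in> cG C m" "a \<le> l" "b \<le> m"
  shows "s_pow C n (l + m) (a + b) (opc C l m a \<alpha> \<beta>) = opc C l (m + n) a \<alpha> (s_pow C n m b \<beta>)"
proof -
  define b' where "b' = cact C m (cinv C m \<beta>) b"
  have b': "b' \<le> m" unfolding b'_def using assms by (simp add: cact_cinv_le)
  have "cact C (l + m) (cinv C (l + m) (boxp C a m (l - a) \<beta>)) (a + b) = a + b'"
    unfolding b'_def using assms by (intro cact_cinv_boxp_inside) auto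
  then have "s_pow C n (l + m) (a + b) (opc C l m a \<alpha> \<beta>) =
    cmul C (l + m + n) (s_pow C n (l + m) (a + b) (boxp C a m (l - a) \<beta>))
      (s_pow C n (l + m) (a + b') (s_pow C m l a \<alpha>))"
    unfolding opc_def using assms by (simp add: s_pow_cmul boxp_closed s_pow_closed)
  also have "s_pow C n (l + m) (a + b) (boxp C a m (l - a) \<beta>) =
      boxp C a (m + n) (l - a) (s_pow C n m b \<beta>)"
    using s_pow_boxp_inside[OF assms(2,4), of n "l - a" a] assms by (simp add: add.commute)
  also have "s_pow C n (l + m) (a + b') (s_pow C m l a \<alpha>) = s_pow C (m + n) l a \<alpha>"
    by (rule s_pow_s_pow_inside[OF assms(1,3) b'])
  finally show ?thesis unfolding opc_def by (simp add: ac_simps)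
qed

lemma s_pow_opc_above:
  assumes "\<alpha> \<in> cG C l" "\<beta> \<in> cG C m" "a < b" "b \<le> l"
  shows "s_pow C n (l + m) (b + m) (opc C l m a \<alpha> \<beta>) = opc C (l + n) m a (s_pow C n l b \<alpha>) \<beta>"
proof -
  have "cact C (l + m) (cinv C (l + m) (boxp C a m (l - a) \<beta>)) (b + m) = b + m"
    using assms by (intro cact_cinv_boxp_outside) auto
  then have "s_pow C n (l + m) (b + m) (opc C l m a \<alpha> \<beta>) =
    cmul C (l + m + n) (s_pow C n (l + m) (b + m) (boxp C a m (l - a) \<beta>))
      (s_pow C n (l + m) (b + m) (s_pow C m l a \<alpha>))"
    unfolding opc_def using assms by (simp add: s_pow_cmul boxp_closed s_pow_closed)
  then show ?thesis
    unfolding opc_def using assms s_pow_boxp_above[OF assms(2-4)]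
    by (simp add: s_pow_s_pow_commute ac_simps)
qed

lemma s_pow_opc_below:
  assumes "\<alpha> \<in> cG C l" "\<gamma> \<in> cG C n" "a < b" "b \<le> l"
  shows "s_pow C m (l + n) a (opc C l n b \<alpha> \<gamma>) = opc C (l + m) n (b + m) (s_pow C m l a \<alpha>) \<gamma>"
proof -
  have "cact C (l + n) (cinv C (l + n) (boxp C b n (l - b) \<gamma>)) a = a"
    using assms by (intro cact_cinv_boxp_outside) auto
  then have "s_pow C m (l + n) a (opc C l n b \<alpha> \<gamma>) =
    cmul C (l + n + m) (s_pow C m (l + n) a (boxp C b n (l - b) \<gamma>)) (s_pow C m (l + n) a (s_pow C n l b \<alpha>))"
    unfolding opc_def using assms by (simp add: s_pow_cmul boxp_closed s_pow_closed)
  then show ?thesis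
    unfolding opc_def using assms s_pow_boxp_below[OF assms(2-4)]
    by (simp add: s_pow_s_pow_commute ac_simps)
qed

lemma opc_assoc:
  assumes "\<alpha> \<in> cG C l" "\<beta> \<in> cG C m" "\<gamma> \<in> cG C n" "a \<le> l" "b \<le> m"
  shows "opc C (l + m) n (a + b) (opc C l m a \<alpha> \<beta>) \<gamma> = opc C l (m + n) a \<alpha> (opc C m n b \<beta> \<gamma>)"
proof -
  let ?N = "l + (m + n)"
  have "boxp C (a + b) n (l + m - (a + b)) \<gamma> = boxp C a (m + n) (l - a) (boxp C b n (m - b) \<gamma>)"
    using boxp_boxp[OF assms(3), of "m + n" "m - b" b a "l - a"] assms by (simp add: ac_simps)
  then have "opc C (l + m) n (a + b) (opc C l m a \<alpha> \<beta>) \<gamma> =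
    cmul C ?N (boxp C a (m + n) (l - a) (boxp C b n (m - b) \<gamma>))
      (cmul C ?N (boxp C a (m + n) (l - a) (s_pow C n m b \<beta>)) (s_pow C (m + n) l a \<alpha>))"
    using s_pow_opc_inside[OF assms(1,2,4,5), of n] by (simp add: opc_def add.assoc)
  also have "\<dots> = cmul C ?N (boxp C a (m + n) (l - a) (opc C m n b \<beta> \<gamma>)) (s_pow C (m + n) l a \<alpha>)"
    using assms boxp_cmul[where N = ?N and b = "l - a" and a = a and m = "m + n"]
    by (simp add: opc_def cmul_assoc boxp_closed s_pow_closed)
  finally show ?thesis by (simp add: opc_def)
qed

lemma opc_comm:
  assumes "\<alpha> \<in> cG C l" "\<beta> \<in> cG C m" "\<gamma> \<in> cG C n" "a < b" "b \<le> l"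
  shows "opc C (l + m) n (b + m) (opc C l m a \<alpha> \<beta>) \<gamma> = opc C (l + n) m a (opc C l n b \<alpha> \<gamma>) \<beta>"
proof -
  let ?N = "l + m + n" and ?S = "s_pow C m (l + n) a (s_pow C n l b \<alpha>)"
  let ?B\<beta> = "boxp C a m (l + n - a) \<beta>" and ?B\<gamma> = "boxp C (b + m) n (l - b) \<gamma>"
  have closed: "?B\<beta> \<in> cG C ?N" "?B\<gamma> \<in> cG C ?N" "?S \<in> cG C ?N"
    using assms s_pow_closed[of b l \<alpha> n] s_pow_closed[of a "l + n" "s_pow C n l b \<alpha>" m]
    by (auto intro!: boxp_closed simp: ac_simps)
  have "opc C (l + m) n (b + m) (opc C l m a \<alpha> \<beta>) \<gamma> = cmul C ?N ?B\<gamma> (cmul C ?N ?B\<beta> ?S)"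
    using s_pow_opc_above[OF assms(1,2,4,5), of n] by (simp add: opc_def ac_simps)
  also have "\<dots> = cmul C ?N ?B\<beta> (cmul C ?N ?B\<gamma> ?S)"
    using closed boxp_cmul_commute[OF assms(2-5), of ?N] by (simp add: cmul_assoc[symmetric])
  also have "\<dots> = opc C (l + n) m a (opc C l n b \<alpha> \<gamma>) \<beta>"
    using s_pow_opc_below[OF assms(1,3,4,5), of m] assms by (simp add: opc_def s_pow_s_pow_commute ac_simps)
  finally show ?thesis .
qed

lemma cd_opc_inside:
  assumes "\<alpha> \<in> cG C l" "\<beta> \<in> cG C (Suc m)" "a \<le> l" "b \<le> Suc m"
  shows "cd C (l + Suc m) (a + b) (opc C l (Suc m) a \<alpha> \<beta>) = opc C l m a \<alpha> (cd C (Suc m) b \<beta>)"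
proof -
  define X where "X = boxp C a (Suc m) (l - a) \<beta>"
  define Y where "Y = s_pow C (Suc m) l a \<alpha>"
  have X: "X \<in> cG C (Suc (l + m))" unfolding X_def using assms by (intro boxp_closed) auto
  have Y: "Y \<in> cG C (Suc (l + m))" unfolding Y_def using assms s_pow_closed[of a l \<alpha> "Suc m"] by simp
  define b' where "b' = cact C (Suc m) (cinv C (Suc m) \<beta>) b"
  have b': "b' \<le> Suc m" unfolding b'_def using assms by (simp add: cact_cinv_le)
  have c: "cact C (Suc (l + m)) (cinv C (Suc (l + m)) X) (a + b) = a + b'"
    unfolding X_def b'_def using assms by (intro cact_cinv_boxp_inside) auto
  have e1: "cd C (Suc (l + m)) (a + b) X = boxp C a m (l - a) (cd C (Suc m) b \<beta>)"
  proof -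
    have q: "Suc (l + m) = Suc m + (l - a) + a" using assms by simp
    show ?thesis unfolding X_def q by (rule cd_boxp_inside[OF assms(2) assms(4)])
  qed
  have e2: "cd C (Suc (l + m)) (a + b') Y = s_pow C m l a \<alpha>"
    unfolding Y_def using cd_s_pow_inside[OF assms(1) assms(3) b'] by simp
  have "cd C (l + Suc m) (a + b) (opc C l (Suc m) a \<alpha> \<beta>) =
      cd C (Suc (l + m)) (a + b) (cmul C (Suc (l + m)) X Y)"
    unfolding opc_def X_def Y_def by simp
  also have "\<dots> = cmul C (l + m) (cd C (Suc (l + m)) (a + b) X) (cd C (Suc (l + m)) (a + b') Y)"
    using cd_cmul[OF _ X Y, of "a + b"] c assms by simp
  also have "\<dots> = opc C l m a \<alpha> (cd C (Suc m) b \<beta>)" unfolding e1 e2 opc_def ..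
  finally show ?thesis .
qed

lemma cd_opc_below:
  assumes "\<alpha> \<in> cG C (Suc l)" "\<gamma> \<in> cG C n" "c \<le> b" "b \<le> l"
  shows "cd C (Suc l + n) c (opc C (Suc l) n (Suc b) \<alpha> \<gamma>) = opc C l n b (cd C (Suc l) c \<alpha>) \<gamma>"
proof -
  define X where "X = boxp C (Suc b) n (l - b) \<gamma>"
  define Y where "Y = s_pow C n (Suc l) (Suc b) \<alpha>"
  have X: "X \<in> cG C (Suc (l + n))" unfolding X_def using assms by (intro boxp_closed) auto
  have Y: "Y \<in> cG C (Suc (l + n))" unfolding Y_def using assms s_pow_closed[of "Suc b" "Suc l" \<alpha> n] by simp
  have c: "cact C (Suc (l + n)) (cinv C (Suc (l + n)) X) c = c"
    unfolding X_def using assms by (intro cact_cinv_boxp_outside) auto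
  have e1: "cd C (Suc (l + n)) c X = boxp C b n (l - b) \<gamma>"
  proof -
    have q: "Suc (l + n) = n + (l - b) + Suc b" using assms by simp
    show ?thesis unfolding X_def q using cd_boxp_below[OF assms(2), of c "Suc b" "l - b"] assms by simp
  qed
  have e2: "cd C (Suc (l + n)) c Y = s_pow C n l b (cd C (Suc l) c \<alpha>)"
    unfolding Y_def using cd_s_pow_below[OF assms(1), of c "Suc b" n] assms by simp
  have "cd C (Suc l + n) c (opc C (Suc l) n (Suc b) \<alpha> \<gamma>) =
      cd C (Suc (l + n)) c (cmul C (Suc (l + n)) X Y)"
    unfolding opc_def X_def Y_def by simp
  also have "\<dots> = cmul C (l + n) (cd C (Suc (l + n)) c X) (cd C (Suc (l + n)) c Y)"
    using cd_cmul[OF _ X Y, of c] c assms by simp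
  also have "\<dots> = opc C l n b (cd C (Suc l) c \<alpha>) \<gamma>" unfolding e1 e2 opc_def ..
  finally show ?thesis .
qed

lemma cd_opc_above:
  assumes "\<alpha> \<in> cG C (Suc l)" "\<gamma> \<in> cG C n" "b < c" "c \<le> Suc l"
  shows "cd C (Suc l + n) (c + n) (opc C (Suc l) n b \<alpha> \<gamma>) = opc C l n b (cd C (Suc l) c \<alpha>) \<gamma>"
proof -
  define X where "X = boxp C b n (Suc (l - b)) \<gamma>"
  define Y where "Y = s_pow C n (Suc l) b \<alpha>"
  have q0: "Suc l - b = Suc (l - b)" using assms by simp
  have X: "X \<in> cG C (Suc (l + n))" unfolding X_def using assms by (intro boxp_closed) auto
  have Y: "Y \<in> cG C (Suc (l + n))" unfolding Y_def using assms s_pow_closed[of b "Suc l" \<alpha> n] by simp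
  have c: "cact C (Suc (l + n)) (cinv C (Suc (l + n)) X) (c + n) = c + n"
    unfolding X_def using assms by (intro cact_cinv_boxp_outside) auto
  have e1: "cd C (Suc (l + n)) (c + n) X = boxp C b n (l - b) \<gamma>"
  proof -
    have q: "Suc (l + n) = n + Suc (l - b) + b" using assms by simp
    show ?thesis unfolding X_def q using cd_boxp_above[OF assms(2), of b "c + n" "l - b"] assms by simp
  qed
  have e2: "cd C (Suc (l + n)) (c + n) Y = s_pow C n l b (cd C (Suc l) c \<alpha>)"
    unfolding Y_def using cd_s_pow_above[OF assms(1), of b c n] assms by simp
  have "cd C (Suc l + n) (c + n) (opc C (Suc l) n b \<alpha> \<gamma>) =
      cd C (Suc (l + n)) (c + n) (cmul C (Suc (l + n)) X Y)"
    unfolding opc_def X_def Y_def q0 by simp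
  also have "\<dots> = cmul C (l + n) (cd C (Suc (l + n)) (c + n) X) (cd C (Suc (l + n)) (c + n) Y)"
    using cd_cmul[OF _ X Y, of "c + n"] c assms by simp
  also have "\<dots> = opc C l n b (cd C (Suc l) c \<alpha>) \<gamma>" unfolding e1 e2 opc_def ..
  finally show ?thesis .
qed

lemma opc_cone: "a \<le> n \<Longrightarrow> opc C n m a (cone C n) (cone C m) = cone C (n + m)"
  using boxp_cone[of "n + m" m "n - a" a] by (simp add: opc_def s_pow_cone cmul_cone_left cone_closed)

text \<open>Forms symmetric in the two indices involved, as they arise after transport along sigma^-1.\<close>

lemma cd_cd_sym:
  assumes "p \<noteq> q" "p \<le> Suc (Suc n)" "q \<le> Suc (Suc n)" "x \<in> cG C (Suc (Suc n))"
  shows "cd C (Suc n) (if p < q then p else p - 1) (cd C (Suc (Suc n)) q x) =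
    cd C (Suc n) (if q < p then q else q - 1) (cd C (Suc (Suc n)) p x)"
  using assms cd_cd[of p q n x] cd_cd[of q p n x] by (cases "p < q") auto

lemma opc_comm_sym:
  assumes "\<alpha> \<in> cG C l" "\<beta> \<in> cG C m" "\<gamma> \<in> cG C n" "a \<noteq> q" "a \<le> l" "q \<le> l"
  shows "opc C (l + m) n (if q < a then q else q + m) (opc C l m a \<alpha> \<beta>) \<gamma> =
    opc C (l + n) m (if a < q then a else a + n) (opc C l n q \<alpha> \<gamma>) \<beta>"
  using assms opc_comm[of \<alpha> l \<beta> m \<gamma> n a q] opc_comm[of \<alpha> l \<gamma> n \<beta> m q a] by (cases "a < q") auto

lemma cd_opc_outside:
  assumes "\<alpha> \<in> cG C (Suc l)" "\<gamma> \<in> cG C n" "a \<noteq> q" "a \<le> Suc l" "q \<le> Suc l"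
  shows "cd C (Suc l + n) (if q < a then q else q + n) (opc C (Suc l) n a \<alpha> \<gamma>) =
    opc C l n (if a < q then a else a - 1) (cd C (Suc l) q \<alpha>) \<gamma>"
proof (cases "q < a")
  case True
  then obtain b where "a = Suc b" "q \<le> b" "b \<le> l" using assms by (cases a) auto
  with True show ?thesis using cd_opc_below[OF assms(1,2)] by simp
next
  case False
  with assms have "a < q" by simp
  with False show ?thesis using cd_opc_above[OF assms(1,2)] assms by simp
qed

section \<open>The symmetric crossed simplicial group as the image of G\<close>

lemma sym_face_Bij: "\<sigma> \<in> Bij {..Suc n} \<Longrightarrow> i \<le> Suc n \<Longrightarrow> sym_face (Suc n) i \<sigma> \<in> Bij {..n}"
  using cact_surj[of \<sigma> "Suc n"] by (metis cact_cd cact_Bij cd_closed)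

lemma s_pow_Sym_Bij: "\<sigma> \<in> Bij {..n} \<Longrightarrow> i \<le> n \<Longrightarrow> s_pow Sym m n i \<sigma> \<in> Bij {..n + m}"
  using cact_surj[of \<sigma> n] by (metis cact_s_pow cact_Bij s_pow_closed)

lemma boxp_Sym_Bij: "\<tau> \<in> Bij {..m} \<Longrightarrow> N = m + b + a \<Longrightarrow> boxp Sym a m b \<tau> \<in> Bij {..N}"
  using cact_surj[of \<tau> m] by (metis cact_boxp cact_Bij boxp_closed)

lemma opc_Sym_Bij:
  "\<sigma> \<in> Bij {..n} \<Longrightarrow> \<tau> \<in> Bij {..m} \<Longrightarrow> i \<le> n \<Longrightarrow> opc Sym n m i \<sigma> \<tau> \<in> Bij {..n + m}"
  using cact_surj[of \<sigma> n] cact_surj[of \<tau> m] by (metis cact_opc cact_Bij opc_closed)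

lemma pinv_s_pow_Sym: "\<sigma> \<in> Bij {..n} \<Longrightarrow> i \<le> n \<Longrightarrow> pinv (n + k) (s_pow Sym k n i \<sigma>) i = pinv n \<sigma> i"
  using cact_surj[of \<sigma> n] by (metis cact_s_pow pinv_cact_s_pow)

lemma s_pow_Sym_Suc_apply:
  assumes "\<sigma> \<in> Bij {..n}" "i \<le> n" "x \<le> n + Suc k"
  shows "s_pow Sym (Suc k) n i \<sigma> x =
    (if x = pinv n \<sigma> i then i else if x = Suc (pinv n \<sigma> i) then Suc i
     else let v = s_pow Sym k n i \<sigma> (codeg (pinv n \<sigma> i) x) in if v < i then v else Suc v)"
  using assms by (simp add: Sym_simps sym_degen_def pinv_s_pow_Sym)

text \<open>s_i^k doubles the position sigma^-1(i) into a block of k + 1 consecutive positions, which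
  are sent onto the block i, ..., i + k; all other values are shifted past that block.\<close>

lemma s_pow_Sym_apply:
  assumes "\<sigma> \<in> Bij {..n}" "i \<le> n" "y \<le> n + k"
  shows "s_pow Sym k n i \<sigma> y =
   (if y < pinv n \<sigma> i then (if \<sigma> y < i then \<sigma> y else \<sigma> y + k)
    else if y \<le> pinv n \<sigma> i + k then i + (y - pinv n \<sigma> i)
    else (if \<sigma> (y - k) < i then \<sigma> (y - k) else \<sigma> (y - k) + k))"
  using assms(3)
proof (induction k arbitrary: y)
  case 0
  have "\<sigma> (pinv n \<sigma> i) = i" using assms f_pinv_f by blast
  with 0 show ?case by (cases "y = pinv n \<sigma> i") auto
next
  case (Suc k)
  define a where "a = pinv n \<sigma> i"
  have a: "a \<le> n" "\<sigma> a = i" unfolding a_def using assms pinv_le f_pinv_f by blast+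
  note step = s_pow_Sym_Suc_apply[OF assms(1,2) Suc.prems, folded a_def]
  note IH = Suc.IH[folded a_def]
  consider "y < a" | "y = a" | "y = Suc a" | "Suc a < y" "y \<le> a + Suc k" | "a + Suc k < y"
    by linarith
  then show ?case
  proof cases
    case 1
    with a IH[of y] show ?thesis by (simp add: step codeg_def Let_def a_def[symmetric] del: s_pow.simps)
  next
    case 4
    then have "\<not> y - 1 < a" "y - 1 \<le> a + k" "y - 1 \<le> n + k" "Suc (i + (y - 1 - a)) = i + (y - a)"
      using a by auto
    with 4 IH[of "y - 1"] show ?thesis by (simp add: step codeg_def Let_def a_def[symmetric] del: s_pow.simps)
  next
    case 5
    then have "\<not> y - 1 < a" "\<not> y - 1 \<le> a + k" "y - 1 \<le> n + k" "y - 1 - k = y - Suc k"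
      using Suc.prems by auto
    with 5 IH[of "y - 1"] show ?thesis by (simp add: step codeg_def Let_def a_def[symmetric] del: s_pow.simps)
  qed (use step in \<open>simp_all add: a_def[symmetric] del: s_pow.simps\<close>)
qed

lemma opc_Sym_apply:
  assumes "\<sigma> \<in> Bij {..n}" "\<tau> \<in> Bij {..m}" "i \<le> n" "y \<le> n + m"
  shows "opc Sym n m i \<sigma> \<tau> y = boxp Sym i m (n - i) \<tau> (s_pow Sym m n i \<sigma> y)"
  using assms unfolding opc_def by (simp add: Sym_simps BijGroup_mult_apply boxp_Sym_Bij s_pow_Sym_Bij)

lemma opc_Sym_apply_inside:
  "\<sigma> \<in> Bij {..n} \<Longrightarrow> \<tau> \<in> Bij {..m} \<Longrightarrow> i \<le> n \<Longrightarrow> t \<le> m \<Longrightarrow>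
   opc Sym n m i \<sigma> \<tau> (pinv n \<sigma> i + t) = i + \<tau> t"
  using pinv_le[of \<sigma> n i] by (simp add: opc_Sym_apply s_pow_Sym_apply boxp_Sym_apply)

lemma opc_Sym_apply_outside:
  assumes "\<sigma> \<in> Bij {..n}" "\<tau> \<in> Bij {..m}" "i \<le> n" "y \<le> n" "y \<noteq> pinv n \<sigma> i"
  shows "opc Sym n m i \<sigma> \<tau> (if y < pinv n \<sigma> i then y else y + m) =
    (if \<sigma> y < i then \<sigma> y else \<sigma> y + m)"
proof -
  have "\<sigma> y \<noteq> i" "\<sigma> y \<le> n" using assms pinv_f_f Bij_atMost_le by metis+
  with assms show ?thesis by (simp add: opc_Sym_apply s_pow_Sym_apply boxp_Sym_apply)
qed

lemma pinv_opc_Sym_inside: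
  "\<sigma> \<in> Bij {..n} \<Longrightarrow> \<tau> \<in> Bij {..m} \<Longrightarrow> i \<le> n \<Longrightarrow> j \<le> m \<Longrightarrow>
   pinv (n + m) (opc Sym n m i \<sigma> \<tau>) (i + j) = pinv n \<sigma> i + pinv m \<tau> j"
  by (intro pinv_eqI opc_Sym_Bij) (simp_all add: opc_Sym_apply_inside f_pinv_f pinv_le add_mono)

lemma pinv_opc_Sym_outside:
  assumes "\<sigma> \<in> Bij {..n}" "\<tau> \<in> Bij {..m}" "i \<le> n" "k \<le> n" "k \<noteq> i"
  shows "pinv (n + m) (opc Sym n m i \<sigma> \<tau>) (if k < i then k else k + m) =
    (if pinv n \<sigma> k < pinv n \<sigma> i then pinv n \<sigma> k else pinv n \<sigma> k + m)"
proof (rule pinv_eqI)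
  have "pinv n \<sigma> k \<noteq> pinv n \<sigma> i" using assms f_pinv_f by metis
  then show "opc Sym n m i \<sigma> \<tau> (if pinv n \<sigma> k < pinv n \<sigma> i then pinv n \<sigma> k else pinv n \<sigma> k + m) =
    (if k < i then k else k + m)"
    using assms by (simp add: opc_Sym_apply_outside pinv_le f_pinv_f)
qed (use assms pinv_le[of \<sigma> n k] in \<open>simp_all add: opc_Sym_Bij\<close>)

lemma pinv_sym_face:
  assumes "\<sigma> \<in> Bij {..Suc n}" "i \<le> Suc n" "j \<le> Suc n" "i \<noteq> j"
  shows "pinv n (sym_face (Suc n) j \<sigma>) (if i < j then i else i - 1) =
    (if pinv (Suc n) \<sigma> i < pinv (Suc n) \<sigma> j then pinv (Suc n) \<sigma> i else pinv (Suc n) \<sigma> i - 1)"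
proof -
  define p where "p = pinv (Suc n) \<sigma> i"
  define q where "q = pinv (Suc n) \<sigma> j"
  have pq: "p \<le> Suc n" "q \<le> Suc n" "\<sigma> p = i" "\<sigma> q = j" "p \<noteq> q"
    unfolding p_def q_def using assms pinv_le f_pinv_f by metis+
  have "(if p < q then p else p - 1) \<le> n" using pq by auto
  moreover have "sym_face (Suc n) j \<sigma> (if p < q then p else p - 1) = (if i < j then i else i - 1)"
    using calculation pq by (auto simp: sym_face_def delta_def delta_inv_def q_def[symmetric])
  ultimately show ?thesis unfolding p_def[symmetric] q_def[symmetric]
    using assms by (intro pinv_eqI sym_face_Bij)
qed

lemma sym_face_mult:
  assumes "\<sigma> \<in> Bij {..Suc n}" "\<tau> \<in> Bij {..Suc n}" "j \<le> Suc n"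
  shows "sym_face (Suc n) j (mult (BijGroup {..Suc n}) \<sigma> \<tau>) =
    mult (BijGroup {..n}) (sym_face (Suc n) j \<sigma>) (sym_face (Suc n) (pinv (Suc n) \<sigma> j) \<tau>)"
proof -
  obtain g where g: "g \<in> cG C (Suc n)" "cact C (Suc n) g = \<sigma>" using cact_surj assms by blast
  obtain k where k: "k \<in> cG C (Suc n)" "cact C (Suc n) k = \<tau>" using cact_surj assms by blast
  have q: "cact C (Suc n) (cinv C (Suc n) g) j \<le> Suc n" using g assms by (simp add: cact_cinv_le)
  have "sym_face (Suc n) j (mult (BijGroup {..Suc n}) \<sigma> \<tau>) =
      cact C n (cd C (Suc n) j (cmul C (Suc n) g k))"
    using g k assms by (simp add: cact_cd cact_cmul cmul_closed)
  also have "\<dots> =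
      mult (BijGroup {..n}) (cact C n (cd C (Suc n) j g)) (cact C n (cd C (Suc n) (cact C (Suc n) (cinv C (Suc n) g) j) k))"
    using g k assms q by (simp add: cd_cmul cact_cmul cd_closed)
  also have "\<dots> =
      mult (BijGroup {..n}) (sym_face (Suc n) j \<sigma>) (sym_face (Suc n) (pinv (Suc n) \<sigma> j) \<tau>)"
    using g k assms q by (simp add: cact_cd cact_cinv)
  finally show ?thesis .
qed

lemma sym_face_sym_face:
  assumes "\<sigma> \<in> Bij {..Suc (Suc n)}" "i < j" "j \<le> Suc (Suc n)"
  shows "sym_face (Suc n) i (sym_face (Suc (Suc n)) j \<sigma>) =
      sym_face (Suc n) (j - 1) (sym_face (Suc (Suc n)) i \<sigma>)"
proof -
  obtain g where g: "g \<in> cG C (Suc (Suc n))" "cact C (Suc (Suc n)) g = \<sigma>" using cact_surj assms by blast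
  have "sym_face (Suc n) i (sym_face (Suc (Suc n)) j \<sigma>) =
      cact C n (cd C (Suc n) i (cd C (Suc (Suc n)) j g))"
    using g assms by (simp add: cact_cd cd_closed)
  also have "\<dots> =
      cact C n (cd C (Suc n) (j - 1) (cd C (Suc (Suc n)) i g))" using cd_cd g assms by simp
  also have "\<dots> = sym_face (Suc n) (j - 1) (sym_face (Suc (Suc n)) i \<sigma>)"
    using g assms by (simp add: cact_cd cd_closed)
  finally show ?thesis .
qed

lemma opc_Sym_assoc:
  assumes "\<sigma> \<in> Bij {..l}" "\<tau> \<in> Bij {..m}" "\<rho> \<in> Bij {..n}" "a \<le> l" "b \<le> m"
  shows "opc Sym (l + m) n (a + b) (opc Sym l m a \<sigma> \<tau>) \<rho> =
      opc Sym l (m + n) a \<sigma> (opc Sym m n b \<tau> \<rho>)"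
proof -
  obtain x where x: "x \<in> cG C l" "cact C l x = \<sigma>" using cact_surj assms by blast
  obtain y where y: "y \<in> cG C m" "cact C m y = \<tau>" using cact_surj assms by blast
  obtain z where z: "z \<in> cG C n" "cact C n z = \<rho>" using cact_surj assms by blast
  have "opc Sym (l + m) n (a + b) (opc Sym l m a \<sigma> \<tau>) \<rho> =
      cact C (l + m + n) (opc C (l + m) n (a + b) (opc C l m a x y) z)"
    using x y z assms by (simp add: cact_opc opc_closed)
  also have "\<dots> = cact C (l + (m + n)) (opc C l (m + n) a x (opc C m n b y z))"
    using opc_assoc[OF x(1) y(1) z(1) assms(4) assms(5)] by (simp add: add.assoc)
  also have "\<dots> = opc Sym l (m + n) a \<sigma> (opc Sym m n b \<tau> \<rho>)"
    using x y z assms by (simp add: cact_opc opc_closed)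
  finally show ?thesis .
qed

lemma opc_Sym_comm:
  assumes "\<sigma> \<in> Bij {..l}" "\<tau> \<in> Bij {..m}" "\<rho> \<in> Bij {..n}" "a < b" "b \<le> l"
  shows "opc Sym (l + m) n (b + m) (opc Sym l m a \<sigma> \<tau>) \<rho> =
      opc Sym (l + n) m a (opc Sym l n b \<sigma> \<rho>) \<tau>"
proof -
  obtain x where x: "x \<in> cG C l" "cact C l x = \<sigma>" using cact_surj assms by blast
  obtain y where y: "y \<in> cG C m" "cact C m y = \<tau>" using cact_surj assms by blast
  obtain z where z: "z \<in> cG C n" "cact C n z = \<rho>" using cact_surj assms by blast
  have "opc Sym (l + m) n (b + m) (opc Sym l m a \<sigma> \<tau>) \<rho> =
      cact C (l + m + n) (opc C (l + m) n (b + m) (opc C l m a x y) z)"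
    using x y z assms by (simp add: cact_opc opc_closed)
  also have "\<dots> = cact C (l + n + m) (opc C (l + n) m a (opc C l n b x z) y)"
    using opc_comm[OF x(1) y(1) z(1) assms(4) assms(5)] by (simp add: ac_simps)
  also have "\<dots> = opc Sym (l + n) m a (opc Sym l n b \<sigma> \<rho>) \<tau>"
    using x y z assms by (simp add: cact_opc opc_closed)
  finally show ?thesis .
qed

lemma opc_Sym_mult:
  assumes "\<sigma> \<in> Bij {..n}" "\<sigma>' \<in> Bij {..n}" "\<tau> \<in> Bij {..m}" "\<tau>' \<in> Bij {..m}" "i \<le> n"
  shows "opc Sym n m i (mult (BijGroup {..n}) \<sigma> \<sigma>') (mult (BijGroup {..m}) \<tau> \<tau>') =
    mult (BijGroup {..n + m}) (opc Sym n m i \<sigma> \<tau>) (opc Sym n m (pinv n \<sigma> i) \<sigma>' \<tau>')"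
proof -
  obtain x where x: "x \<in> cG C n" "cact C n x = \<sigma>" using cact_surj assms by blast
  obtain x' where x': "x' \<in> cG C n" "cact C n x' = \<sigma>'" using cact_surj assms by blast
  obtain y where y: "y \<in> cG C m" "cact C m y = \<tau>" using cact_surj assms by blast
  obtain y' where y': "y' \<in> cG C m" "cact C m y' = \<tau>'" using cact_surj assms by blast
  have c: "cact C n (cinv C n x) i \<le> n" using x assms by (simp add: cact_cinv_le)
  have "opc Sym n m i (mult (BijGroup {..n}) \<sigma> \<sigma>') (mult (BijGroup {..m}) \<tau> \<tau>') =
     cact C (n + m) (opc C n m i (cmul C n x x') (cmul C m y y'))"
    using x x' y y' assms by (simp add: cact_opc cact_cmul cmul_closed)
  also have "\<dots> =
      cact C (n + m) (cmul C (n + m) (opc C n m i x y) (opc C n m (cact C n (cinv C n x) i) x' y'))"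
    using opc_cmul[OF x(1) x'(1) y(1) y'(1) assms(5)] by simp
  also have "\<dots> = mult (BijGroup {..n + m}) (opc Sym n m i \<sigma> \<tau>) (opc Sym n m (pinv n \<sigma> i) \<sigma>' \<tau>')"
    using x x' y y' assms c by (simp add: cact_opc cact_cmul opc_closed cact_cinv)
  finally show ?thesis .
qed

lemma sym_face_opc_Sym_inside:
  assumes "\<sigma> \<in> Bij {..l}" "\<tau> \<in> Bij {..Suc m}" "a \<le> l" "b \<le> Suc m"
  shows "sym_face (l + Suc m) (a + b) (opc Sym l (Suc m) a \<sigma> \<tau>) =
      opc Sym l m a \<sigma> (sym_face (Suc m) b \<tau>)"
proof -
  obtain x where x: "x \<in> cG C l" "cact C l x = \<sigma>" using cact_surj assms by blast
  obtain y where y: "y \<in> cG C (Suc m)" "cact C (Suc m) y = \<tau>" using cact_surj assms by blast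
  have O: "opc C l (Suc m) a x y \<in> cG C (Suc (l + m))" using opc_closed[OF assms(3) x(1) y(1)] by simp
  have "sym_face (l + Suc m) (a + b) (opc Sym l (Suc m) a \<sigma> \<tau>) =
      cact C (l + m) (cd C (Suc (l + m)) (a + b) (opc C l (Suc m) a x y))"
    using cact_cd[OF _ O, of "a + b"] cact_opc[OF assms(3) x(1) y(1)] x y assms by simp
  also have "\<dots> = cact C (l + m) (opc C l m a x (cd C (Suc m) b y))"
    using cd_opc_inside[OF x(1) y(1) assms(3) assms(4)] by simp
  also have "\<dots> = opc Sym l m a \<sigma> (sym_face (Suc m) b \<tau>)"
    using x y assms by (simp add: cact_opc cd_closed cact_cd)
  finally show ?thesis .
qed

lemma sym_face_opc_Sym_below:
  assumes "\<sigma> \<in> Bij {..Suc l}" "\<rho> \<in> Bij {..n}" "c \<le> b" "b \<le> l"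
  shows "sym_face (Suc l + n) c (opc Sym (Suc l) n (Suc b) \<sigma> \<rho>) =
      opc Sym l n b (sym_face (Suc l) c \<sigma>) \<rho>"
proof -
  obtain x where x: "x \<in> cG C (Suc l)" "cact C (Suc l) x = \<sigma>" using cact_surj assms by blast
  obtain z where z: "z \<in> cG C n" "cact C n z = \<rho>" using cact_surj assms by blast
  have b: "Suc b \<le> Suc l" using assms by simp
  have O: "opc C (Suc l) n (Suc b) x z \<in> cG C (Suc (l + n))" using opc_closed[OF b x(1) z(1)] by simp
  have "sym_face (Suc l + n) c (opc Sym (Suc l) n (Suc b) \<sigma> \<rho>) =
      cact C (l + n) (cd C (Suc (l + n)) c (opc C (Suc l) n (Suc b) x z))"
    using cact_cd[OF _ O, of c] cact_opc[OF b x(1) z(1)] x z assms by simp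
  also have "\<dots> = cact C (l + n) (opc C l n b (cd C (Suc l) c x) z)"
    using cd_opc_below[OF x(1) z(1) assms(3) assms(4)] by simp
  also have "\<dots> = opc Sym l n b (sym_face (Suc l) c \<sigma>) \<rho>"
    using x z assms by (simp add: cact_opc cd_closed cact_cd)
  finally show ?thesis .
qed

lemma sym_face_opc_Sym_above:
  assumes "\<sigma> \<in> Bij {..Suc l}" "\<rho> \<in> Bij {..n}" "b < c" "c \<le> Suc l"
  shows "sym_face (Suc l + n) (c + n) (opc Sym (Suc l) n b \<sigma> \<rho>) =
      opc Sym l n b (sym_face (Suc l) c \<sigma>) \<rho>"
proof -
  obtain x where x: "x \<in> cG C (Suc l)" "cact C (Suc l) x = \<sigma>" using cact_surj assms by blast
  obtain z where z: "z \<in> cG C n" "cact C n z = \<rho>" using cact_surj assms by blast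
  have b: "b \<le> Suc l" "b \<le> l" using assms by simp_all
  have O: "opc C (Suc l) n b x z \<in> cG C (Suc (l + n))" using opc_closed[OF b(1) x(1) z(1)] by simp
  have "sym_face (Suc l + n) (c + n) (opc Sym (Suc l) n b \<sigma> \<rho>) =
      cact C (l + n) (cd C (Suc (l + n)) (c + n) (opc C (Suc l) n b x z))"
    using cact_cd[OF _ O, of "c + n"] cact_opc[OF b(1) x(1) z(1)] x z assms by simp
  also have "\<dots> = cact C (l + n) (opc C l n b (cd C (Suc l) c x) z)"
    using cd_opc_above[OF x(1) z(1) assms(3) assms(4)] by simp
  also have "\<dots> = opc Sym l n b (sym_face (Suc l) c \<sigma>) \<rho>"
    using x z assms b by (simp add: cact_opc cd_closed cact_cd)
  finally show ?thesis .
qed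

lemma opc_Sym_unit_left:
  assumes "\<tau> \<in> Bij {..m}"
  shows "opc Sym 0 m 0 (one (BijGroup {..0})) \<tau> = \<tau>"
proof -
  obtain y where y: "y \<in> cG C m" "cact C m y = \<tau>" using cact_surj assms by blast
  have e: "cact C (0 + m) (opc C 0 m 0 (cone C 0) y) =
      opc Sym 0 m 0 (cact C 0 (cone C 0)) (cact C m y)"
    by (rule cact_opc) (auto simp: cone_closed y)
  show ?thesis using e opc_unit_left[OF y(1)] y(2) unfolding cact_cone by simp
qed

lemma opc_Sym_unit_right:
  assumes "\<sigma> \<in> Bij {..n}" "i \<le> n"
  shows "opc Sym n 0 i \<sigma> (one (BijGroup {..0})) = \<sigma>"
proof -
  obtain x where x: "x \<in> cG C n" "cact C n x = \<sigma>" using cact_surj assms by blast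
  have e: "cact C (n + 0) (opc C n 0 i x (cone C 0)) =
      opc Sym n 0 i (cact C n x) (cact C 0 (cone C 0))"
    by (rule cact_opc) (auto simp: cone_closed x assms)
  show ?thesis using e opc_unit_right[OF x(1) assms(2)] x(2) unfolding cact_cone by simp
qed

section \<open>The action groupoids\<close>

lemma Gamma_simps:
  "oObj (Gamma C) n = Bij {..n}"
  "oMor (Gamma C) n = Bij {..n} \<times> cG C n"
  "osrc (Gamma C) n p = fst p"
  "otgt (Gamma C) n p = mult (BijGroup {..n}) (fst p) (pinv n (cact C n (snd p)))"
  "ocmp (Gamma C) n q p = (fst p, cmul C n (snd q) (snd p))"
  "oid (Gamma C) n \<sigma> = (\<sigma>, cone C n)"
  "ofaceO (Gamma C) n j \<sigma> = sym_face n j \<sigma>"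
  "ofaceM (Gamma C) n j p =
    (sym_face n j (fst p), cinv C (n - 1) (cd C n (pinv n (fst p) j) (cinv C n (snd p))))"
  "ocircO (Gamma C) n m i \<sigma> \<tau> = opc Sym n m i \<sigma> \<tau>"
  "ocircM (Gamma C) n m i p q = (opc Sym n m i (fst p) (fst q),
    cinv C (n + m) (opc C n m (pinv n (fst p) i) (cinv C n (snd p)) (cinv C m (snd q))))"
  by (simp_all add: Gamma_def)

lemma Gamma_is_groupoid: "is_groupoid (Gamma C) n"
proof -
  let ?tgt = "\<lambda>\<sigma> f. mult (BijGroup {..n}) \<sigma> (pinv n (cact C n f))"
  have tgt_Bij: "?tgt \<sigma> f \<in> Bij {..n}" if "\<sigma> \<in> Bij {..n}" "f \<in> cG C n" for \<sigma> f
    using that by (simp add: BijGroup_mult_Bij pinv_Bij cact_Bij)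
  have tgt_cmul: "?tgt \<sigma> (cmul C n g f) = ?tgt (?tgt \<sigma> f) g"
    if "\<sigma> \<in> Bij {..n}" "f \<in> cG C n" "g \<in> cG C n" for \<sigma> f g
    using that by (simp add: cact_cmul pinv_mult cact_Bij pinv_Bij BijGroup_mult_assoc)
  have tgt_cinv: "?tgt (?tgt \<sigma> f) (cinv C n f) = \<sigma>" if "\<sigma> \<in> Bij {..n}" "f \<in> cG C n" for \<sigma> f
    using that
    by (simp add: pinv_cact_cinv BijGroup_mult_assoc pinv_Bij cact_Bij BijGroup_pinv_mult BijGroup_mult_one)
  have inverse: "\<exists>g \<in> Bij {..n} \<times> cG C n. fst g = ?tgt \<sigma> f \<and> ?tgt (fst g) (snd g) = \<sigma> \<and>
      (\<sigma>, cmul C n (snd g) f) = (\<sigma>, cone C n) \<and> (fst g, cmul C n f (snd g)) = (?tgt \<sigma> f, cone C n)"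
    if "\<sigma> \<in> Bij {..n}" "f \<in> cG C n" for \<sigma> f
    using that by (intro bexI[of _ "(?tgt \<sigma> f, cinv C n f)"])
      (simp_all add: tgt_Bij tgt_cinv cinv_closed cmul_cinv_left cmul_cinv_right)
  show ?thesis
    unfolding is_groupoid_def Gamma_simps
    using inverse by (auto simp: tgt_Bij tgt_cmul cmul_closed cmul_assoc cone_closed cact_cone pinv_one
        BijGroup_mult_one cmul_cone_left cmul_cone_right)
qed

lemma Gamma_faceM_otgt:
  assumes "\<sigma> \<in> Bij {..Suc k}" "g \<in> cG C (Suc k)" "j \<le> Suc k"
  shows "mult (BijGroup {..k}) (sym_face (Suc k) j \<sigma>)
      (pinv k (cact C k (cinv C k (cd C (Suc k) (pinv (Suc k) \<sigma> j) (cinv C (Suc k) g))))) =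
    sym_face (Suc k) j (mult (BijGroup {..Suc k}) \<sigma> (pinv (Suc k) (cact C (Suc k) g)))"
proof -
  have q: "pinv (Suc k) \<sigma> j \<le> Suc k" using assms pinv_le by blast
  then have "pinv k (cact C k (cinv C k (cd C (Suc k) (pinv (Suc k) \<sigma> j) (cinv C (Suc k) g)))) =
    sym_face (Suc k) (pinv (Suc k) \<sigma> j) (pinv (Suc k) (cact C (Suc k) g))"
    using assms by (simp add: cact_cd cd_closed cinv_closed cact_cinv pinv_pinv sym_face_Bij pinv_Bij cact_Bij)
  then show ?thesis using assms by (simp add: sym_face_mult pinv_Bij cact_Bij)
qed

lemma Gamma_faceM_ocmp:
  assumes "\<sigma> \<in> Bij {..Suc k}" "g \<in> cG C (Suc k)" "g' \<in> cG C (Suc k)" "j \<le> Suc k"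
  shows "cinv C k (cd C (Suc k) (pinv (Suc k) \<sigma> j) (cinv C (Suc k) (cmul C (Suc k) g' g))) =
    cmul C k
      (cinv C k (cd C (Suc k) (pinv (Suc k) (mult (BijGroup {..Suc k}) \<sigma> (pinv (Suc k) (cact C (Suc k) g))) j)
        (cinv C (Suc k) g')))
      (cinv C k (cd C (Suc k) (pinv (Suc k) \<sigma> j) (cinv C (Suc k) g)))"
proof -
  define q where "q = pinv (Suc k) \<sigma> j"
  have q: "q \<le> Suc k" "cact C (Suc k) g q \<le> Suc k"
    unfolding q_def using assms pinv_le Bij_atMost_le cact_Bij by blast+
  have "pinv (Suc k) (mult (BijGroup {..Suc k}) \<sigma> (pinv (Suc k) (cact C (Suc k) g))) j =
      cact C (Suc k) g q"
    unfolding q_def using assms by (simp add: pinv_mult pinv_Bij cact_Bij pinv_pinv BijGroup_mult_apply)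
  moreover have "cd C (Suc k) q (cinv C (Suc k) (cmul C (Suc k) g' g)) =
    cmul C k (cd C (Suc k) q (cinv C (Suc k) g)) (cd C (Suc k) (cact C (Suc k) g q) (cinv C (Suc k) g'))"
    using assms q by (simp add: cinv_cmul cd_cmul cinv_closed cinv_cinv)
  ultimately show ?thesis
    unfolding q_def[symmetric] using assms q by (simp add: cinv_cmul cd_closed cinv_closed)
qed

lemma Gamma_face_functor: "1 \<le> n \<Longrightarrow> j \<le> n \<Longrightarrow> face_functor (Gamma C) n j"
  unfolding face_functor_def Gamma_simps
  by (cases n) (auto simp: Gamma_faceM_otgt Gamma_faceM_ocmp sym_face_Bij cd_closed cinv_closed
      pinv_le cinv_cone cd_cone)

lemma Gamma_circM_otgt:
  assumes "\<sigma> \<in> Bij {..n}" "\<tau> \<in> Bij {..m}" "f \<in> cG C n" "g \<in> cG C m" "i \<le> n"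
  shows "mult (BijGroup {..n + m}) (opc Sym n m i \<sigma> \<tau>)
      (pinv (n + m) (cact C (n + m) (cinv C (n + m) (opc C n m (pinv n \<sigma> i) (cinv C n f) (cinv C m g))))) =
    opc Sym n m i (mult (BijGroup {..n}) \<sigma> (pinv n (cact C n f))) (mult (BijGroup {..m}) \<tau> (pinv m (cact C m g)))"
proof -
  have a: "pinv n \<sigma> i \<le> n" using assms pinv_le by blast
  then have "pinv (n + m) (cact C (n + m) (cinv C (n + m) (opc C n m (pinv n \<sigma> i) (cinv C n f) (cinv C m g)))) =
    opc Sym n m (pinv n \<sigma> i) (pinv n (cact C n f)) (pinv m (cact C m g))"
    using assms by (simp add: cact_cinv pinv_pinv cact_Bij cact_opc opc_closed cinv_closed opc_Sym_Bij pinv_Bij)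
  then show ?thesis using assms by (simp add: opc_Sym_mult pinv_Bij cact_Bij)
qed

lemma Gamma_circM_ocmp:
  assumes "\<sigma> \<in> Bij {..n}" "x \<in> cG C n" "x' \<in> cG C n" "y \<in> cG C m" "y' \<in> cG C m" "i \<le> n"
  shows "cinv C (n + m) (opc C n m (pinv n \<sigma> i) (cinv C n (cmul C n x' x)) (cinv C m (cmul C m y' y))) =
    cmul C (n + m)
      (cinv C (n + m) (opc C n m (pinv n (mult (BijGroup {..n}) \<sigma> (pinv n (cact C n x))) i)
        (cinv C n x') (cinv C m y')))
      (cinv C (n + m) (opc C n m (pinv n \<sigma> i) (cinv C n x) (cinv C m y)))"
proof -
  define a where "a = pinv n \<sigma> i"
  have a: "a \<le> n" "cact C n x a \<le> n" unfolding a_def using assms pinv_le Bij_atMost_le cact_Bij by blast+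
  have "pinv n (mult (BijGroup {..n}) \<sigma> (pinv n (cact C n x))) i = cact C n x a"
    unfolding a_def using assms by (simp add: pinv_mult pinv_Bij cact_Bij pinv_pinv BijGroup_mult_apply)
  moreover have "opc C n m a (cinv C n (cmul C n x' x)) (cinv C m (cmul C m y' y)) =
    cmul C (n + m) (opc C n m a (cinv C n x) (cinv C m y)) (opc C n m (cact C n x a) (cinv C n x') (cinv C m y'))"
    using assms a by (simp add: cinv_cmul opc_cmul cinv_closed cinv_cinv)
  ultimately show ?thesis
    unfolding a_def[symmetric] using assms a by (simp add: cinv_cmul opc_closed cinv_closed)
qed

lemma Gamma_circ_functor: "i \<le> n \<Longrightarrow> circ_functor (Gamma C) n m i"
  unfolding circ_functor_def Gamma_simps
  by (auto simp: Gamma_circM_otgt Gamma_circM_ocmp opc_Sym_Bij opc_closed cinv_closed pinv_le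
      cinv_cone opc_cone)

text \<open>Writing a morphism as [sigma, u^-1], the faces and compositions act on u by the
  corresponding operations of G at the transported indices.\<close>

lemma Gamma_mor_cases:
  assumes "x \<in> oMor (Gamma C) n"
  obtains \<sigma> u where "x = (\<sigma>, cinv C n u)" "\<sigma> \<in> Bij {..n}" "u \<in> cG C n"
  using assms by (metis Gamma_simps(2) mem_Times_iff prod.collapse cinv_cinv cinv_closed)

lemma Gamma_faceM_cinv:
  "u \<in> cG C n \<Longrightarrow>
   ofaceM (Gamma C) n j (\<sigma>, cinv C n u) = (sym_face n j \<sigma>, cinv C (n - 1) (cd C n (pinv n \<sigma> j) u))"
  by (simp add: Gamma_simps cinv_cinv)

lemma Gamma_circM_cinv:
  "u \<in> cG C n \<Longrightarrow> v \<in> cG C m \<Longrightarrow>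
   ocircM (Gamma C) n m i (\<sigma>, cinv C n u) (\<tau>, cinv C m v) =
   (opc Sym n m i \<sigma> \<tau>, cinv C (n + m) (opc C n m (pinv n \<sigma> i) u v))"
  by (simp add: Gamma_simps cinv_cinv)

lemma Gamma_faceO_faceO:
  assumes "2 \<le> n" "i < j" "j \<le> n" "x \<in> oObj (Gamma C) n"
  shows "ofaceO (Gamma C) (n - 1) i (ofaceO (Gamma C) n j x) =
    ofaceO (Gamma C) (n - 1) (j - 1) (ofaceO (Gamma C) n i x)"
proof -
  obtain k where "n = Suc (Suc k)" using assms(1) by (metis add_2_eq_Suc le_Suc_ex)
  with assms show ?thesis by (simp add: Gamma_simps sym_face_sym_face)
qed

lemma Gamma_faceM_faceM:
  assumes "2 \<le> n" "i < j" "j \<le> n" "f \<in> oMor (Gamma C) n"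
  shows "ofaceM (Gamma C) (n - 1) i (ofaceM (Gamma C) n j f) =
    ofaceM (Gamma C) (n - 1) (j - 1) (ofaceM (Gamma C) n i f)"
proof -
  obtain k where n: "n = Suc (Suc k)" using assms(1) by (metis add_2_eq_Suc le_Suc_ex)
  obtain \<sigma> u where f: "f = (\<sigma>, cinv C (Suc (Suc k)) u)" "\<sigma> \<in> Bij {..Suc (Suc k)}" "u \<in> cG C (Suc (Suc k))"
    using Gamma_mor_cases assms(4) unfolding n .
  define p q where "p = pinv (Suc (Suc k)) \<sigma> i" and "q = pinv (Suc (Suc k)) \<sigma> j"
  have pq: "p \<noteq> q" "p \<le> Suc (Suc k)" "q \<le> Suc (Suc k)"
    unfolding p_def q_def using assms f n f_pinv_f[of \<sigma> "Suc (Suc k)" i] f_pinv_f[of \<sigma> "Suc (Suc k)" j]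
    pinv_le by auto
  have "pinv (Suc k) (sym_face (Suc (Suc k)) j \<sigma>) i = (if p < q then p else p - 1)"
    using pinv_sym_face[of \<sigma> "Suc k" i j] assms f n unfolding p_def q_def by simp
  moreover have "pinv (Suc k) (sym_face (Suc (Suc k)) i \<sigma>) (j - 1) = (if q < p then q else q - 1)"
    using pinv_sym_face[of \<sigma> "Suc k" j i] assms f n unfolding p_def q_def by simp
  ultimately show ?thesis
    using cd_cd_sym[of p q k u] sym_face_sym_face[of \<sigma> k i j] pq assms f n
    by (simp add: Gamma_faceM_cinv cd_closed p_def[symmetric] q_def[symmetric])
qed

lemma Gamma_unit_obj: "one (BijGroup {..0}) \<in> oObj (Gamma C) 0"
  by (simp add: Gamma_simps BijGroup_one_Bij)

lemma Gamma_circO_unit_left: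
  "y \<in> oObj (Gamma C) m \<Longrightarrow> ocircO (Gamma C) 0 m 0 (one (BijGroup {..0})) y = y"
  unfolding Gamma_simps by (rule opc_Sym_unit_left)

lemma Gamma_circO_unit_right:
  "x \<in> oObj (Gamma C) n \<Longrightarrow> i \<le> n \<Longrightarrow> ocircO (Gamma C) n 0 i x (one (BijGroup {..0})) = x"
  unfolding Gamma_simps by (rule opc_Sym_unit_right)

lemma Gamma_circM_unit_left:
  assumes "g \<in> oMor (Gamma C) m"
  shows "ocircM (Gamma C) 0 m 0 (oid (Gamma C) 0 (one (BijGroup {..0}))) g = g"
proof -
  obtain \<tau> v where "g = (\<tau>, cinv C m v)" "\<tau> \<in> Bij {..m}" "v \<in> cG C m"
    using Gamma_mor_cases assms .
  moreover have "pinv 0 (one (BijGroup {..0})) 0 = 0"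
    using pinv_le[OF BijGroup_one_Bij, of 0 0] by simp
  ultimately show ?thesis
    by (simp add: Gamma_simps cinv_cone cinv_cinv opc_Sym_unit_left opc_unit_left del: atMost_0)
qed

lemma Gamma_circM_unit_right:
  assumes "f \<in> oMor (Gamma C) n" "i \<le> n"
  shows "ocircM (Gamma C) n 0 i f (oid (Gamma C) 0 (one (BijGroup {..0}))) = f"
proof -
  obtain \<sigma> u where "f = (\<sigma>, cinv C n u)" "\<sigma> \<in> Bij {..n}" "u \<in> cG C n"
    using Gamma_mor_cases assms(1) .
  with assms(2) show ?thesis
    by (simp add: Gamma_simps cinv_cone cinv_cinv opc_Sym_unit_right opc_unit_right pinv_le del: atMost_0)
qed

lemma Gamma_circO_assoc:
  "x \<in> oObj (Gamma C) l \<Longrightarrow> y \<in> oObj (Gamma C) m \<Longrightarrow> z \<in> oObj (Gamma C) n \<Longrightarrow> i \<le> l \<Longrightarrow> j \<le> m \<Longrightarrow>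
   ocircO (Gamma C) (l + m) n (i + j) (ocircO (Gamma C) l m i x y) z =
   ocircO (Gamma C) l (m + n) i x (ocircO (Gamma C) m n j y z)"
  unfolding Gamma_simps by (rule opc_Sym_assoc)

lemma Gamma_circM_assoc:
  assumes "x \<in> oMor (Gamma C) l" "y \<in> oMor (Gamma C) m" "z \<in> oMor (Gamma C) n" "i \<le> l" "j \<le> m"
  shows "ocircM (Gamma C) (l + m) n (i + j) (ocircM (Gamma C) l m i x y) z =
    ocircM (Gamma C) l (m + n) i x (ocircM (Gamma C) m n j y z)"
proof -
  obtain \<sigma> u where x: "x = (\<sigma>, cinv C l u)" "\<sigma> \<in> Bij {..l}" "u \<in> cG C l"
    using Gamma_mor_cases assms(1) .
  obtain \<tau> v where y: "y = (\<tau>, cinv C m v)" "\<tau> \<in> Bij {..m}" "v \<in> cG C m"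
    using Gamma_mor_cases assms(2) .
  obtain \<rho> w where z: "z = (\<rho>, cinv C n w)" "\<rho> \<in> Bij {..n}" "w \<in> cG C n"
    using Gamma_mor_cases assms(3) .
  have "pinv (l + m) (opc Sym l m i \<sigma> \<tau>) (i + j) = pinv l \<sigma> i + pinv m \<tau> j"
    using x y assms by (simp add: pinv_opc_Sym_inside)
  then show ?thesis
    using x y z assms opc_assoc[of u l v m w n "pinv l \<sigma> i" "pinv m \<tau> j"]
    by (simp add: Gamma_circM_cinv opc_closed pinv_le opc_Sym_assoc add.assoc)
qed

lemma Gamma_circO_comm:
  "x \<in> oObj (Gamma C) l \<Longrightarrow> y \<in> oObj (Gamma C) m \<Longrightarrow> z \<in> oObj (Gamma C) n \<Longrightarrow> i < k \<Longrightarrow> k \<le> l \<Longrightarrow>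
   ocircO (Gamma C) (l + m) n (k + m) (ocircO (Gamma C) l m i x y) z =
   ocircO (Gamma C) (l + n) m i (ocircO (Gamma C) l n k x z) y"
  unfolding Gamma_simps by (rule opc_Sym_comm)

lemma Gamma_circM_comm:
  assumes "x \<in> oMor (Gamma C) l" "y \<in> oMor (Gamma C) m" "z \<in> oMor (Gamma C) n" "i < k" "k \<le> l"
  shows "ocircM (Gamma C) (l + m) n (k + m) (ocircM (Gamma C) l m i x y) z =
    ocircM (Gamma C) (l + n) m i (ocircM (Gamma C) l n k x z) y"
proof -
  obtain \<sigma> u where x: "x = (\<sigma>, cinv C l u)" "\<sigma> \<in> Bij {..l}" "u \<in> cG C l"
    using Gamma_mor_cases assms(1) .
  obtain \<tau> v where y: "y = (\<tau>, cinv C m v)" "\<tau> \<in> Bij {..m}" "v \<in> cG C m"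
    using Gamma_mor_cases assms(2) .
  obtain \<rho> w where z: "z = (\<rho>, cinv C n w)" "\<rho> \<in> Bij {..n}" "w \<in> cG C n"
    using Gamma_mor_cases assms(3) .
  define a q where "a = pinv l \<sigma> i" and "q = pinv l \<sigma> k"
  have aq: "a \<noteq> q" "a \<le> l" "q \<le> l"
    unfolding a_def q_def using assms x f_pinv_f[of \<sigma> l i] f_pinv_f[of \<sigma> l k] pinv_le by auto
  have "pinv (l + m) (opc Sym l m i \<sigma> \<tau>) (k + m) = (if q < a then q else q + m)"
    using pinv_opc_Sym_outside[of \<sigma> l \<tau> m i k] x y assms unfolding a_def q_def by simp
  moreover have "pinv (l + n) (opc Sym l n k \<sigma> \<rho>) i = (if a < q then a else a + n)"
    using pinv_opc_Sym_outside[of \<sigma> l \<rho> n k i] x z assms unfolding a_def q_def by simp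
  ultimately show ?thesis
    using x y z assms aq opc_comm_sym[of u l v m w n a q]
    by (simp add: Gamma_circM_cinv opc_closed opc_Sym_comm a_def[symmetric] q_def[symmetric] ac_simps)
qed

lemma Gamma_faceO_circO_inside:
  assumes "x \<in> oObj (Gamma C) l" "y \<in> oObj (Gamma C) m" "1 \<le> m" "i \<le> l" "j \<le> m"
  shows "ofaceO (Gamma C) (l + m) (i + j) (ocircO (Gamma C) l m i x y) =
    ocircO (Gamma C) l (m - 1) i x (ofaceO (Gamma C) m j y)"
proof -
  obtain m' where "m = Suc m'" using assms(3) by (cases m) auto
  with assms show ?thesis using sym_face_opc_Sym_inside[of x l y m' i j] by (simp add: Gamma_simps)
qed

lemma Gamma_faceM_circM_inside:
  assumes "x \<in> oMor (Gamma C) l" "y \<in> oMor (Gamma C) m" "1 \<le> m" "i \<le> l" "j \<le> m"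
  shows "ofaceM (Gamma C) (l + m) (i + j) (ocircM (Gamma C) l m i x y) =
    ocircM (Gamma C) l (m - 1) i x (ofaceM (Gamma C) m j y)"
proof -
  obtain m' where m: "m = Suc m'" using assms(3) by (cases m) auto
  obtain \<sigma> u where x: "x = (\<sigma>, cinv C l u)" "\<sigma> \<in> Bij {..l}" "u \<in> cG C l"
    using Gamma_mor_cases assms(1) .
  obtain \<tau> v where y: "y = (\<tau>, cinv C m v)" "\<tau> \<in> Bij {..m}" "v \<in> cG C m"
    using Gamma_mor_cases assms(2) .
  have "pinv (l + m) (opc Sym l m i \<sigma> \<tau>) (i + j) = pinv l \<sigma> i + pinv m \<tau> j"
    using x y assms by (simp add: pinv_opc_Sym_inside)
  moreover have "opc C l m (pinv l \<sigma> i) u v \<in> cG C (Suc (l + m'))"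
    using x y assms m opc_closed[of "pinv l \<sigma> i" l u v m] by (simp add: pinv_le)
  ultimately show ?thesis
    using x y assms m cd_opc_inside[of u l v m' "pinv l \<sigma> i" "pinv m \<tau> j"]
      sym_face_opc_Sym_inside[of \<sigma> l \<tau> m' i j]
    by (simp add: Gamma_circM_cinv Gamma_faceM_cinv cd_closed pinv_le)
qed

lemma Gamma_faceO_circO_below:
  assumes "x \<in> oObj (Gamma C) l" "z \<in> oObj (Gamma C) n" "i < k" "k \<le> l"
  shows "ofaceO (Gamma C) (l + n) i (ocircO (Gamma C) l n k x z) =
    ocircO (Gamma C) (l - 1) n (k - 1) (ofaceO (Gamma C) l i x) z"
proof -
  obtain l' b where "l = Suc l'" "k = Suc b" using assms by (cases l; cases k) auto
  with assms show ?thesis using sym_face_opc_Sym_below[of x l' z n i b] by (simp add: Gamma_simps)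
qed

lemma Gamma_faceM_circM_below:
  assumes "x \<in> oMor (Gamma C) l" "z \<in> oMor (Gamma C) n" "i < k" "k \<le> l"
  shows "ofaceM (Gamma C) (l + n) i (ocircM (Gamma C) l n k x z) =
    ocircM (Gamma C) (l - 1) n (k - 1) (ofaceM (Gamma C) l i x) z"
proof -
  obtain l' where l: "l = Suc l'" using assms by (cases l) auto
  obtain \<sigma> u where x: "x = (\<sigma>, cinv C (Suc l') u)" "\<sigma> \<in> Bij {..Suc l'}" "u \<in> cG C (Suc l')"
    using Gamma_mor_cases assms(1) unfolding l .
  obtain \<rho> w where z: "z = (\<rho>, cinv C n w)" "\<rho> \<in> Bij {..n}" "w \<in> cG C n"
    using Gamma_mor_cases assms(2) .
  define a q where "a = pinv (Suc l') \<sigma> i" and "q = pinv (Suc l') \<sigma> k"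
  have aq: "a \<noteq> q" "a \<le> Suc l'" "q \<le> Suc l'" unfolding a_def q_def
    using assms x l f_pinv_f[of \<sigma> "Suc l'" i] f_pinv_f[of \<sigma> "Suc l'" k] pinv_le by auto
  have "pinv (Suc l' + n) (opc Sym (Suc l') n k \<sigma> \<rho>) i = (if a < q then a else a + n)"
    using pinv_opc_Sym_outside[of \<sigma> "Suc l'" \<rho> n k i] x z assms l unfolding a_def q_def by simp
  moreover have "pinv l' (sym_face (Suc l') i \<sigma>) (k - 1) = (if q < a then q else q - 1)"
    using pinv_sym_face[of \<sigma> l' k i] x assms l unfolding a_def q_def by simp
  moreover have "opc C (Suc l') n q u w \<in> cG C (Suc (l' + n))" "cd C (Suc l') a u \<in> cG C l'"
    using opc_closed[of q "Suc l'" u w n] cd_closed[of a l' u] aq x z by simp_all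
  ultimately show ?thesis
    using x z assms l cd_opc_outside[of u l' w n q a] aq
      Gamma_faceO_circO_below[of \<sigma> "Suc l'" \<rho> n i k]
    by (simp add: Gamma_simps(1,7,9) Gamma_circM_cinv Gamma_faceM_cinv a_def[symmetric] q_def[symmetric])
qed

lemma Gamma_faceO_circO_above:
  assumes "x \<in> oObj (Gamma C) l" "y \<in> oObj (Gamma C) m" "i < k" "k \<le> l"
  shows "ofaceO (Gamma C) (l + m) (k + m) (ocircO (Gamma C) l m i x y) =
    ocircO (Gamma C) (l - 1) m i (ofaceO (Gamma C) l k x) y"
proof -
  obtain l' where "l = Suc l'" using assms by (cases l) auto
  with assms show ?thesis using sym_face_opc_Sym_above[of x l' y m i k] by (simp add: Gamma_simps)
qed

lemma Gamma_faceM_circM_above: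
  assumes "x \<in> oMor (Gamma C) l" "y \<in> oMor (Gamma C) m" "i < k" "k \<le> l"
  shows "ofaceM (Gamma C) (l + m) (k + m) (ocircM (Gamma C) l m i x y) =
    ocircM (Gamma C) (l - 1) m i (ofaceM (Gamma C) l k x) y"
proof -
  obtain l' where l: "l = Suc l'" using assms by (cases l) auto
  obtain \<sigma> u where x: "x = (\<sigma>, cinv C (Suc l') u)" "\<sigma> \<in> Bij {..Suc l'}" "u \<in> cG C (Suc l')"
    using Gamma_mor_cases assms(1) unfolding l .
  obtain \<tau> v where y: "y = (\<tau>, cinv C m v)" "\<tau> \<in> Bij {..m}" "v \<in> cG C m"
    using Gamma_mor_cases assms(2) .
  define a q where "a = pinv (Suc l') \<sigma> i" and "q = pinv (Suc l') \<sigma> k"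
  have aq: "a \<noteq> q" "a \<le> Suc l'" "q \<le> Suc l'" unfolding a_def q_def
    using assms x l f_pinv_f[of \<sigma> "Suc l'" i] f_pinv_f[of \<sigma> "Suc l'" k] pinv_le by auto
  have "pinv (Suc l' + m) (opc Sym (Suc l') m i \<sigma> \<tau>) (k + m) = (if q < a then q else q + m)"
    using pinv_opc_Sym_outside[of \<sigma> "Suc l'" \<tau> m i k] x y assms l unfolding a_def q_def by simp
  moreover have "pinv l' (sym_face (Suc l') k \<sigma>) i = (if a < q then a else a - 1)"
    using pinv_sym_face[of \<sigma> l' i k] x assms l unfolding a_def q_def by simp
  moreover have "opc C (Suc l') m a u v \<in> cG C (Suc (l' + m))" "cd C (Suc l') q u \<in> cG C l'"
    using opc_closed[of a "Suc l'" u v m] cd_closed[of q l' u] aq x y by simp_all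
  ultimately show ?thesis
    using x y assms l cd_opc_outside[of u l' v m a q] aq
      Gamma_faceO_circO_above[of \<sigma> "Suc l'" \<tau> m i k]
    by (simp add: Gamma_simps(1,7,9) Gamma_circM_cinv Gamma_faceM_cinv a_def[symmetric] q_def[symmetric])
qed

end

theorem theorem3p6:
  fixes C :: "'g csg"
  assumes "operadic_csg C"
  shows "shifted_operad_gpd (Gamma C)"
proof -
  interpret operadic_crossed_simplicial_group C
    by (rule operadic_crossed_simplicial_group.intro) (rule assms)
  show ?thesis
    unfolding shifted_operad_gpd_def
    by (intro conjI allI ballI impI bexI[OF _ Gamma_unit_obj] Gamma_is_groupoid Gamma_face_functor
        Gamma_circ_functor Gamma_faceO_faceO Gamma_faceM_faceM
        Gamma_circO_unit_left Gamma_circM_unit_left Gamma_circO_unit_right Gamma_circM_unit_right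
        Gamma_circO_assoc Gamma_circM_assoc Gamma_circO_comm Gamma_circM_comm
        Gamma_faceO_circO_inside Gamma_faceM_circM_inside Gamma_faceO_circO_below
        Gamma_faceM_circM_below Gamma_faceO_circO_above Gamma_faceM_circM_above)
qed

end
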